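(* Let $R=\mathsf{k}\{x,y\}$, $\mathfrak{D}=\mathsf{k}_{DP}[X,Y]$, $S=\mathsf{k}\{x,y,z,w\}$, $\mathfrak{E}=\mathsf{k}_{DP}[X,Y,Z,W]$. Let $G=g+g_{13}$ with $g\in\mathfrak{D}_{14}$ homogeneous of degree $14$ and $g_{13}\in\mathfrak{E}$ homogeneous of degree $13$, let $B=S/\operatorname{Ann}_S G$, and assume $$H_B(0)=(1,2,3,4,5,6,7,8,7,6,5,4,3,2,1),\qquad H_B(1)=(0,2,4,6,4,2,0,0,2,4,6,4,2,0).$$ Then $H_B(2)_6\ge 4$.
   Context: $\mathsf{k}$ is a field; $S$ acts on $\mathfrak{E}$ by contraction ($x^{\alpha}\circ X^{[\beta]}=X^{[\beta-\alpha]}$ if $\beta\ge\alpha$ componentwise, $0$ otherwise). For $G$ of degree $j$, $B=S/\operatorname{Ann}_S G$ is Artinian Gorenstein of socle degree $j$ with maximal ideal $\mathfrak{m}_B$; $C_B(u)$ is the ideal of $B^*=\bigoplus_i\mathfrak{m}_B^i/\mathfrak{m}_B^{i+1}$ whose degree-$i$ part is the image of $\mathfrak{m}_B^i\cap(0:\mathfrak{m}_B^{\,j+1-u-i})$, and $H_B(u)_i=\dim_{\mathsf{k}}\big(C_B(u)/C_B(u+1)\big)_i$. *)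

theory Defs
  imports Main
begin

text \<open>Monomials / exponent vectors in four variables x,y,z,w (resp. X,Y,Z,W).
  The first two coordinates are x,y (resp. X,Y).\<close>
type_synonym mon = "nat \<times> nat \<times> nat \<times> nat"

definition madd :: "mon \<Rightarrow> mon \<Rightarrow> mon" where
  "madd a b = (case a of (a1,a2,a3,a4) \<Rightarrow> case b of (b1,b2,b3,b4) \<Rightarrow>
     (a1+b1, a2+b2, a3+b3, a4+b4))"

definition msub :: "mon \<Rightarrow> mon \<Rightarrow> mon" where
  "msub a b = (case a of (a1,a2,a3,a4) \<Rightarrow> case b of (b1,b2,b3,b4) \<Rightarrow>
     (a1-b1, a2-b2, a3-b3, a4-b4))"

definition mle :: "mon \<Rightarrow> mon \<Rightarrow> bool" where
  "mle a b = (case a of (a1,a2,a3,a4) \<Rightarrow> case b of (b1,b2,b3,b4) \<Rightarrow>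
     a1 \<le> b1 \<and> a2 \<le> b2 \<and> a3 \<le> b3 \<and> a4 \<le> b4)"

definition mdeg :: "mon \<Rightarrow> nat" where
  "mdeg a = (case a of (a1,a2,a3,a4) \<Rightarrow> a1+a2+a3+a4)"

text \<open>Elements of S = k{x,y,z,w} are formal power series, i.e. coefficient functions
  mon => k.  Elements of the divided power ring E = k_DP[X,Y,Z,W] are coefficient
  functions (w.r.t. the basis X^[beta]) with finite support.\<close>

definition dp_poly :: "(mon \<Rightarrow> 'k::field) \<Rightarrow> bool" where
  "dp_poly G \<longleftrightarrow> finite {b. G b \<noteq> 0}"

definition dp_homog :: "nat \<Rightarrow> (mon \<Rightarrow> 'k::field) \<Rightarrow> bool" where
  "dp_homog d G \<longleftrightarrow> dp_poly G \<and> (\<forall>b. G b \<noteq> 0 \<longrightarrow> mdeg b = d)"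

definition in_D :: "(mon \<Rightarrow> 'k::field) \<Rightarrow> bool" where
  "in_D G \<longleftrightarrow> dp_poly G \<and> (\<forall>a b c d. G (a,b,c,d) \<noteq> 0 \<longrightarrow> c = 0 \<and> d = 0)"

definition dp_deg :: "(mon \<Rightarrow> 'k::field) \<Rightarrow> nat" where
  "dp_deg G = Max (mdeg ` {b. G b \<noteq> 0})"

text \<open>Contraction: x^alpha o X^[beta] = X^[beta - alpha] if alpha <= beta, else 0,
  extended bilinearly: the coefficient of X^[gamma] in f o G is
  sum over beta >= gamma of f_(beta-gamma) * G_beta.\<close>
definition contract :: "(mon \<Rightarrow> 'k::field) \<Rightarrow> (mon \<Rightarrow> 'k) \<Rightarrow> (mon \<Rightarrow> 'k)" where
  "contract f G = (\<lambda>c. \<Sum>b\<in>{b. G b \<noteq> 0 \<and> mle c b}. f (msub b c) * G b)"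

definition smult_ser :: "(mon \<Rightarrow> 'k::field) \<Rightarrow> (mon \<Rightarrow> 'k) \<Rightarrow> (mon \<Rightarrow> 'k)" where
  "smult_ser f g = (\<lambda>c. \<Sum>a\<in>{a. mle a c}. f a * g (msub c a))"

definition ssum :: "(mon \<Rightarrow> 'k::field) set \<Rightarrow> (mon \<Rightarrow> 'k) set \<Rightarrow> (mon \<Rightarrow> 'k) set" where
  "ssum A B = {(\<lambda>c. a c + b c) | a b. a \<in> A \<and> b \<in> B}"

definition ann :: "(mon \<Rightarrow> 'k::field) \<Rightarrow> (mon \<Rightarrow> 'k) set" where
  "ann G = {f. contract f G = (\<lambda>_. 0)}"

text \<open>The i-th power of the maximal ideal m = (x,y,z,w) of the power series ring S:
  series of order at least i.\<close>
definition mpow :: "nat \<Rightarrow> (mon \<Rightarrow> 'k::field) set" where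
  "mpow i = {f. \<forall>a. mdeg a < i \<longrightarrow> f a = 0}"

text \<open>Preimage in S of m_B^i, where B = S / Ann_S G.\<close>
definition mB_pow_pre :: "(mon \<Rightarrow> 'k::field) \<Rightarrow> nat \<Rightarrow> (mon \<Rightarrow> 'k) set" where
  "mB_pow_pre G i = ssum (mpow i) (ann G)"

text \<open>Preimage in S of (0 : m_B^k).\<close>
definition colon_pre :: "(mon \<Rightarrow> 'k::field) \<Rightarrow> nat \<Rightarrow> (mon \<Rightarrow> 'k) set" where
  "colon_pre G k = {f. \<forall>h\<in>mpow k. smult_ser f h \<in> ann G}"

text \<open>Preimage in S of C_B(u)_i + m_B^(i+1), i.e. of the degree-i part of C_B(u)
  viewed inside m_B^i/m_B^(i+1), with j the socle degree (= degree of G).\<close>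
definition C_pre :: "(mon \<Rightarrow> 'k::field) \<Rightarrow> nat \<Rightarrow> nat \<Rightarrow> (mon \<Rightarrow> 'k) set" where
  "C_pre G u i = ssum (ssum (mB_pow_pre G i \<inter> colon_pre G (dp_deg G + 1 - u - i))
                            (mpow (i+1))) (ann G)"

text \<open>Dimension over k of the quotient V/W of subspaces W \<subseteq> V of S: the maximal
  number of elements of V that are linearly independent modulo W.\<close>
definition qdim :: "(mon \<Rightarrow> 'k::field) set \<Rightarrow> (mon \<Rightarrow> 'k) set \<Rightarrow> nat" where
  "qdim V W = Sup {card X | X. finite X \<and> X \<subseteq> V \<and>
      (\<forall>c. (\<lambda>m. \<Sum>x\<in>X. c x * x m) \<in> W \<longrightarrow> (\<forall>x\<in>X. c x = 0))}"

text \<open>H_B(u)_i = dim_k (C_B(u)/C_B(u+1))_i.\<close>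
definition HB :: "(mon \<Rightarrow> 'k::field) \<Rightarrow> nat \<Rightarrow> nat \<Rightarrow> nat" where
  "HB G u i = qdim (C_pre G u i) (C_pre G (Suc u) i)"

end

(* Write G = g + h with g a binary form of degree 14 and h of degree 13, and let R_d be the
   binary forms of degree d in x, y.  The hypotheses are used as follows.
   - H_B(1)_6 = H_B(1)_7 = 0: if f has degree 6 or 7 and f o g = 0, then f o h involves no Z, W,
     since otherwise f would give a nonzero class in H_B(1); in particular h is at most linear
     in Z, W.
   - H_B(0)_7 = 8: r |-> r o g maps R_7 isomorphically onto D_7, so it is injective on R_3.
   - H_B(1)_3 = 6, H_B(0)_4 = 5: the degree-10 parts of the contractions of representatives
     span D_10, and pairing against them shows that no nonzero f in R_10 with f o g = 0 has
     f o h in D.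
   Multiplying by x and y, the forms r in R_7 with r o h in D then span at most 2 dimensions.
   They contain the forms orthogonal to W = {f o h | deg f = 6, f o g = 0}, so dim W >= 6.
   Lifting W through r |-> r o g yields pairs with f o h + r o g = 0; then f + r lies in
   C_B(2)_6 and (f + r) o G = r o h.  Four of these r have r o h with independent Z, W-parts,
   and the corresponding f + r stay independent modulo C_B(3)_6. *)

theory Submission
  imports Defs "HOL-Library.Function_Algebras" "HOL.Vector_Spaces"
begin

declare split_paired_All[simp del] split_paired_Ex[simp del]

section \<open>Monomials\<close>

lemma madd_tuple [simp]: "madd (a1,a2,a3,a4) (b1,b2,b3,b4) = (a1+b1, a2+b2, a3+b3, a4+b4)"
  by (simp add: madd_def)

lemma msub_tuple [simp]: "msub (a1,a2,a3,a4) (b1,b2,b3,b4) = (a1-b1, a2-b2, a3-b3, a4-b4)"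
  by (simp add: msub_def)

lemma mle_tuple [simp]:
  "mle (a1,a2,a3,a4) (b1,b2,b3,b4) \<longleftrightarrow> a1 \<le> b1 \<and> a2 \<le> b2 \<and> a3 \<le> b3 \<and> a4 \<le> b4"
  by (simp add: mle_def)

lemma mdeg_tuple [simp]: "mdeg (a1,a2,a3,a4) = a1 + a2 + a3 + a4"
  by (simp add: mdeg_def)

definition zw_deg :: "mon \<Rightarrow> nat" where
  "zw_deg m = (case m of (a, b, c, d) \<Rightarrow> c + d)"

lemma zw_deg_tuple [simp]: "zw_deg (a, b, c, d) = c + d"
  by (simp add: zw_deg_def)

lemma madd_msub: "mle a b \<Longrightarrow> madd a (msub b a) = b"
  by (cases a, cases b) auto

lemma msub_madd [simp]: "msub (madd a b) b = a"
  by (cases a, cases b) auto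

lemma mle_madd [simp]: "mle b (madd a b)"
  by (cases a, cases b) auto

lemma msub_madd_left [simp]: "msub (madd a b) a = b"
  by (cases a, cases b) auto

lemma mle_madd_left [simp]: "mle a (madd a b)"
  by (cases a, cases b) auto

lemma madd_zero_left [simp]: "madd (0,0,0,0) c = c"
  by (cases c) simp

lemma madd_commute: "madd a b = madd b a"
  by (cases a, cases b) simp

lemma madd_assoc: "madd (madd a b) c = madd a (madd b c)"
  by (cases a, cases b, cases c) simp

lemma madd_left_commute: "madd a (madd b c) = madd b (madd a c)"
  by (cases a, cases b, cases c) simp

lemmas madd_ac = madd_assoc madd_commute madd_left_commute

lemma mdeg_madd [simp]: "mdeg (madd a b) = mdeg a + mdeg b"
  by (cases a, cases b) auto

lemma mdeg_msub: "mle a b \<Longrightarrow> mdeg (msub b a) = mdeg b - mdeg a"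
  by (cases a, cases b) auto

lemma mdeg_mono: "mle a b \<Longrightarrow> mdeg a \<le> mdeg b"
  by (cases a, cases b) auto

lemma zw_deg_madd [simp]: "zw_deg (madd a b) = zw_deg a + zw_deg b"
  by (cases a, cases b) auto

lemma zw_deg_msub: "mle c b \<Longrightarrow> zw_deg (msub b c) = zw_deg b - zw_deg c"
  by (cases c, cases b) auto

lemma zw_deg_mono: "mle c b \<Longrightarrow> zw_deg c \<le> zw_deg b"
  by (cases c, cases b) auto

lemma mle_zero: "mle (0,0,0,0) a"
  by (cases a) simp

lemma mle_trans: "mle a b \<Longrightarrow> mle b c \<Longrightarrow> mle a c"
  by (cases a, cases b, cases c) auto

lemma msub_zero [simp]: "msub a (0,0,0,0) = a"
  by (cases a) auto

lemma msub_msub: "mle a c \<Longrightarrow> msub c (msub c a) = a"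
  by (cases a, cases c) auto

lemma mle_msub: "mle (msub c a) c"
  by (cases a, cases c) auto

lemma mle_msub_iff: "mle c b \<Longrightarrow> mle a (msub b c) \<longleftrightarrow> mle a b \<and> mle c (msub b a)"
  by (cases a, cases b, cases c) auto

lemma msub_commute: "msub (msub b c) a = msub (msub b a) c"
  by (cases a, cases b, cases c) auto

lemma finite_mle: "finite {a. mle a c}"
proof -
  obtain c1 c2 c3 c4 where c: "c = (c1,c2,c3,c4)" by (cases c) auto
  have "{a. mle a c} \<subseteq> {..c1} \<times> {..c2} \<times> {..c3} \<times> {..c4}"
    by (auto simp: c)
  then show ?thesis by (rule finite_subset) auto
qed

lemma finite_below: "finite A \<Longrightarrow> finite {d. \<exists>b\<in>A. mle d b}"
  using finite_mle by (simp add: Collect_bex_eq)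

lemma finite_mdeg_less: "finite {m. mdeg m < N}"
proof -
  have "{m. mdeg m < N} \<subseteq> {m. mle m (N,N,N,N)}"
    by (auto simp: mdeg_def mle_def split: prod.splits)
  then show ?thesis using finite_mle finite_subset by blast
qed

lemma exists_mle_mdeg:
  assumes "t \<le> mdeg b"
  obtains e where "mle e b" "mdeg e = t"
proof -
  obtain b1 b2 b3 b4 where b: "b = (b1, b2, b3, b4)" by (cases b)
  let ?e = "(min t b1, min (t - b1) b2, min (t - b1 - b2) b3, t - b1 - b2 - b3)"
  have "mle ?e b" "mdeg ?e = t" using assms by (simp_all add: b min_def) arith+
  then show ?thesis by (rule that)
qed

lemma split_zw_deg:
  assumes "2 \<le> zw_deg b" "1 \<le> t" "t < mdeg b"
  obtains e c where "b = madd c e" "mdeg e = t" "zw_deg e \<noteq> 0" "zw_deg c \<noteq> 0"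
proof -
  have zw_unit: "\<exists>u. mle u b' \<and> zw_deg u = 1 \<and> mdeg u = 1" if "1 \<le> zw_deg b'" for b'
  proof -
    obtain b1 b2 b3 b4 where b': "b' = (b1, b2, b3, b4)" by (cases b')
    show ?thesis
    proof (cases "1 \<le> b3")
      case True
      then show ?thesis by (intro exI[of _ "(0,0,1,0)"]) (simp add: b')
    next
      case False
      then show ?thesis using that by (intro exI[of _ "(0,0,0,1)"]) (simp add: b')
    qed
  qed
  have "1 \<le> zw_deg b" using assms(1) by simp
  then obtain u1 where u1: "mle u1 b" "zw_deg u1 = 1" "mdeg u1 = 1" using zw_unit by blast
  define b' where "b' = msub b u1"
  have b': "1 \<le> zw_deg b'" "mdeg b' = mdeg b - 1"
    using assms u1 by (auto simp: b'_def zw_deg_msub mdeg_msub)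
  obtain u2 where u2: "mle u2 b'" "zw_deg u2 = 1" "mdeg u2 = 1" using zw_unit b'(1) by blast
  define b'' where "b'' = msub b' u2"
  have "t - 1 \<le> mdeg b''" using b' u2 assms by (simp add: b''_def mdeg_msub)
  then obtain e' where e': "mle e' b''" "mdeg e' = t - 1" by (rule exists_mle_mdeg)
  have "b = madd u1 (madd u2 (madd e' (msub b'' e')))"
    using madd_msub[OF u1(1)] madd_msub[OF u2(1)] madd_msub[OF e'(1)]
    unfolding b'_def b''_def by simp
  then have "b = madd (madd u2 (msub b'' e')) (madd u1 e')"
    by (simp add: madd_ac)
  then show ?thesis
    by (rule that) (use u1 u2 e' assms in simp_all)
qed

section \<open>Contraction\<close>

lemma contract_eq_sum:
  assumes "finite A" "{b. G b \<noteq> 0} \<subseteq> A"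
  shows "contract f G c = (\<Sum>b\<in>A. if mle c b then f (msub b c) * G b else 0)"
proof -
  have "contract f G c = (\<Sum>b\<in>{b\<in>A. G b \<noteq> 0 \<and> mle c b}. f (msub b c) * G b)"
    unfolding contract_def using assms by (intro sum.cong) auto
  also have "\<dots> = (\<Sum>b\<in>A. if G b \<noteq> 0 \<and> mle c b then f (msub b c) * G b else 0)"
    using assms(1) by (simp add: sum.inter_filter)
  also have "\<dots> = (\<Sum>b\<in>A. if mle c b then f (msub b c) * G b else 0)"
    by (intro sum.cong) auto
  finally show ?thesis .
qed

lemma contract_nonzeroE:
  assumes "contract f G c \<noteq> 0"
  obtains b where "G b \<noteq> 0" "mle c b" "f (msub b c) \<noteq> 0"
proof -
  obtain b where "b \<in> {b. G b \<noteq> 0 \<and> mle c b}" "f (msub b c) * G b \<noteq> 0"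
    using assms unfolding contract_def by (rule sum.not_neutral_contains_not_neutral)
  then show ?thesis by (intro that[of b]) auto
qed

lemma contract_eq_0I:
  assumes "\<And>b. G b \<noteq> 0 \<Longrightarrow> mle c b \<Longrightarrow> f (msub b c) = 0"
  shows "contract f G c = 0"
  unfolding contract_def using assms by (intro sum.neutral) simp

lemma contract_support: "{c. contract f G c \<noteq> 0} \<subseteq> {c. \<exists>b\<in>{b. G b \<noteq> 0}. mle c b}"
  by (blast elim: contract_nonzeroE)

lemma dp_poly_contract: "dp_poly G \<Longrightarrow> dp_poly (contract f G)"
  unfolding dp_poly_def using contract_support finite_below finite_subset by blast

lemma dp_poly_add: "dp_poly G1 \<Longrightarrow> dp_poly G2 \<Longrightarrow> dp_poly (\<lambda>b. G1 b + G2 b)"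
  unfolding dp_poly_def by (rule finite_subset[of _ "{b. G1 b \<noteq> 0} \<union> {b. G2 b \<noteq> 0}"]) auto

lemma sum_over_interval_reflect:
  fixes f h :: "mon \<Rightarrow> 'k::field"
  assumes "mle c b"
  shows "(\<Sum>a\<in>{a. mle a (msub b c)}. f a * h (msub (msub b c) a))
       = (\<Sum>d\<in>{d. mle c d \<and> mle d b}. h (msub d c) * f (msub b d))"
proof (rule sum.reindex_bij_witness[of _ "\<lambda>d. msub b d" "\<lambda>a. msub b a"])
  fix a assume "a \<in> {a. mle a (msub b c)}"
  then have a: "mle a b" "mle c (msub b a)" using mle_msub_iff[OF assms] by auto
  then show "msub b (msub b a) = a" by (simp add: msub_msub)
  show "msub b a \<in> {d. mle c d \<and> mle d b}" using a mle_msub by auto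
  show "h (msub (msub b a) c) * f (msub b (msub b a)) = f a * h (msub (msub b c) a)"
    using a by (simp add: msub_msub msub_commute mult.commute)
next
  fix d assume "d \<in> {d. mle c d \<and> mle d b}"
  then have d: "mle c d" "mle d b" by auto
  then show "msub b (msub b d) = d" by (simp add: msub_msub)
  show "msub b d \<in> {a. mle a (msub b c)}"
    using d mle_msub_iff[OF assms] mle_msub msub_msub by (metis mem_Collect_eq)
qed

text \<open>Both sides expand to the sum of \<open>f\<^sub>b\<^sub>-\<^sub>d h\<^sub>d\<^sub>-\<^sub>c G\<^sub>b\<close> over \<open>c \<le> d \<le> b\<close>.\<close>

lemma contract_smult_ser:
  assumes G: "dp_poly G"
  shows "contract (smult_ser f h) G = contract h (contract f G)"
proof
  fix c
  define S where "S = {b. G b \<noteq> 0}"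
  define A where "A = {d. \<exists>b\<in>S. mle d b}"
  have fS: "finite S" using G by (simp add: dp_poly_def S_def)
  have fA: "finite A" unfolding A_def using fS by (rule finite_below)
  have sA: "{d. contract f G d \<noteq> 0} \<subseteq> A"
    unfolding A_def S_def by (rule contract_support)
  have cf: "contract f G d = (\<Sum>b\<in>S. if mle d b then f (msub b d) * G b else 0)" for d
    by (rule contract_eq_sum[OF fS]) (simp add: S_def)
  have inner: "(\<Sum>d\<in>A. if mle c d \<and> mle d b then h (msub d c) * f (msub b d) * G b else 0)
      = (if mle c b then (\<Sum>a\<in>{a. mle a (msub b c)}. f a * h (msub (msub b c) a)) * G b else 0)"
    if b: "b \<in> S" for b
  proof -
    have "{d\<in>A. mle c d \<and> mle d b} = {d. mle c d \<and> mle d b}"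
      using b unfolding A_def by blast
    then have "(\<Sum>d\<in>A. if mle c d \<and> mle d b then h (msub d c) * f (msub b d) * G b else 0)
        = (\<Sum>d\<in>{d. mle c d \<and> mle d b}. h (msub d c) * f (msub b d)) * G b"
      using fA by (simp add: sum.inter_filter[symmetric] sum_distrib_right)
    moreover have "{d. mle c d \<and> mle d b} = {}" if "\<not> mle c b"
      using that mle_trans by blast
    ultimately show ?thesis
      using sum_over_interval_reflect[of c b f h] by (cases "mle c b") simp_all
  qed
  have "contract h (contract f G) c
      = (\<Sum>d\<in>A. if mle c d then h (msub d c) * contract f G d else 0)"
    by (rule contract_eq_sum[OF fA sA])
  also have "\<dots> = (\<Sum>d\<in>A. \<Sum>b\<in>S. if mle c d \<and> mle d b then h (msub d c) * f (msub b d) * G b else 0)"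
    by (intro sum.cong refl)
       (simp add: cf sum_distrib_left mult.assoc if_distrib cong: if_cong)
  also have "\<dots> = (\<Sum>b\<in>S. \<Sum>d\<in>A. if mle c d \<and> mle d b then h (msub d c) * f (msub b d) * G b else 0)"
    by (rule sum.swap)
  also have "\<dots> = (\<Sum>b\<in>S. if mle c b then (\<Sum>a\<in>{a. mle a (msub b c)}. f a * h (msub (msub b c) a)) * G b else 0)"
    using inner by (rule sum.cong[OF refl])
  also have "\<dots> = contract (smult_ser f h) G c"
    by (simp add: contract_eq_sum[OF fS] S_def smult_ser_def)
  finally show "contract (smult_ser f h) G c = contract h (contract f G) c" by simp
qed

lemma smult_ser_commute: "smult_ser f h = smult_ser h f"
proof
  fix c
  show "smult_ser f h c = smult_ser h f c"
    unfolding smult_ser_def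
  proof (rule sum.reindex_bij_witness[of _ "msub c" "msub c"])
    fix a assume a: "a \<in> {a. mle a c}"
    then show "msub c (msub c a) = a" by (simp add: msub_msub)
    show "h (msub c a) * f (msub c (msub c a)) = f a * h (msub c a)"
      using a by (simp add: msub_msub mult.commute)
  qed (simp_all add: msub_msub mle_msub)
qed

lemma contract_commute:
  "dp_poly G \<Longrightarrow> contract f (contract a G) = contract a (contract f G)"
  by (metis contract_smult_ser smult_ser_commute)

text \<open>\<open>monom e\<close> stands both for the monomial \<open>x\<^sup>e\<close> of \<open>S\<close> and for the basis element
  \<open>X\<^sup>[\<^sup>e\<^sup>]\<close> of \<open>\<EE>\<close>.\<close>

definition monom :: "mon \<Rightarrow> mon \<Rightarrow> 'k::zero_neq_one" where
  "monom e = (\<lambda>m. if m = e then 1 else 0)"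

lemma inj_monom: "inj monom"
  by (rule injI) (metis monom_def zero_neq_one)

lemma contract_monom:
  assumes G: "dp_poly G"
  shows "contract (monom e) G c = G (madd c e)"
proof -
  define A where "A = {b. G b \<noteq> 0}"
  have fA: "finite A" using G by (simp add: A_def dp_poly_def)
  have "contract (monom e) G c = (\<Sum>b\<in>A. if mle c b then monom e (msub b c) * G b else 0)"
    by (rule contract_eq_sum[OF fA]) (simp add: A_def)
  also have "\<dots> = (\<Sum>b\<in>A. if b = madd c e then G b else 0)"
  proof (intro sum.cong refl)
    fix b
    show "(if mle c b then monom e (msub b c) * G b else 0) = (if b = madd c e then G b else 0)"
      by (cases "mle c b") (auto simp: monom_def madd_msub)
  qed
  also have "\<dots> = G (madd c e)"
    using fA by (simp add: sum.delta A_def)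
  finally show ?thesis .
qed

lemma smult_ser_monom: "smult_ser (monom e) f c = (if mle e c then f (msub c e) else 0)"
proof -
  have "smult_ser (monom e) f c = (\<Sum>a\<in>{a. mle a c}. if a = e then f (msub c a) else 0)"
    unfolding smult_ser_def by (intro sum.cong) (auto simp: monom_def)
  also have "\<dots> = (if mle e c then f (msub c e) else 0)"
    using finite_mle[of c] by (simp add: sum.delta')
  finally show ?thesis .
qed

lemma contract_smult_ser_monom:
  assumes "dp_poly G"
  shows "contract (smult_ser (monom e) f) G c = contract f G (madd c e)"
  by (simp add: smult_ser_commute contract_smult_ser[OF assms]
      contract_monom[OF dp_poly_contract[OF assms]])

section \<open>Linear algebra of coefficient functions\<close>

definition fscale :: "'k::field \<Rightarrow> (mon \<Rightarrow> 'k) \<Rightarrow> mon \<Rightarrow> 'k" where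
  "fscale c f = (\<lambda>m. c * f m)"

lemma fscale_apply [simp]: "fscale c f m = c * f m"
  by (simp add: fscale_def)

interpretation vs: vector_space "fscale :: 'k::field \<Rightarrow> (mon \<Rightarrow> 'k) \<Rightarrow> mon \<Rightarrow> 'k"
  by unfold_locales (auto simp: fscale_def fun_eq_iff algebra_simps)

interpretation vsp: vector_space_pair
  "fscale :: 'k::field \<Rightarrow> (mon \<Rightarrow> 'k) \<Rightarrow> mon \<Rightarrow> 'k" "fscale :: 'k \<Rightarrow> (mon \<Rightarrow> 'k) \<Rightarrow> mon \<Rightarrow> 'k"
  by unfold_locales

abbreviation lin :: "((mon \<Rightarrow> 'k::field) \<Rightarrow> mon \<Rightarrow> 'k) \<Rightarrow> bool" where
  "lin \<equiv> Vector_Spaces.linear fscale fscale"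

lemma linI:
  assumes "\<And>x y. L (x + y) = L x + L y" "\<And>c x. L (fscale c x) = fscale c (L x)"
  shows "lin L"
  using assms by (simp add: linear_iff vs.vector_space_axioms)

lemma sum_apply: "(\<Sum>x\<in>X. F x) m = (\<Sum>x\<in>X. F x m)"
  by (induction X rule: infinite_finite_induct) auto

lemma sum_fscale_eq: "(\<Sum>x\<in>X. fscale (c x) (v x)) = (\<lambda>m. \<Sum>x\<in>X. c x * v x m)"
  by (simp add: fun_eq_iff sum_apply)

lemma contract_add: "contract (f1 + f2) G = contract f1 G + contract f2 G"
  unfolding contract_def by (auto simp: fun_eq_iff sum.distrib algebra_simps)

lemma contract_fscale: "contract (fscale a f) G = fscale a (contract f G)"
  unfolding contract_def by (auto simp: fun_eq_iff sum_distrib_left algebra_simps)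

lemma lin_contract: "lin (\<lambda>f. contract f G)"
  by (rule linI) (simp_all add: contract_add contract_fscale)

lemmas contract_zero [simp] = vsp.linear_0[OF lin_contract]

lemmas contract_diff = vsp.linear_diff[OF lin_contract]

lemmas contract_sum = vsp.linear_sum[OF lin_contract]

lemma contract_lincomb:
  "contract (\<Sum>x\<in>X. fscale (c x) (v x)) G = (\<Sum>x\<in>X. fscale (c x) (contract (v x) G))"
  by (simp add: contract_sum contract_fscale)

lemma contract_add_right:
  assumes "dp_poly G1" "dp_poly G2"
  shows "contract f (\<lambda>b. G1 b + G2 b) = contract f G1 + contract f G2"
proof
  fix c
  define A where "A = {b. G1 b \<noteq> 0} \<union> {b. G2 b \<noteq> 0}"
  have fA: "finite A" using assms by (simp add: A_def dp_poly_def)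
  have "contract f (\<lambda>b. G1 b + G2 b) c
      = (\<Sum>b\<in>A. (if mle c b then f (msub b c) * G1 b else 0) + (if mle c b then f (msub b c) * G2 b else 0))"
    by (subst contract_eq_sum[OF fA]) (auto simp: A_def algebra_simps intro!: sum.cong)
  also have "\<dots> = contract f G1 c + contract f G2 c"
    by (simp add: sum.distrib contract_eq_sum[OF fA, of G1] contract_eq_sum[OF fA, of G2] A_def)
  finally show "contract f (\<lambda>b. G1 b + G2 b) c = (contract f G1 + contract f G2) c" by simp
qed

lemma lin_smult_ser_monom: "lin (smult_ser (monom e))"
  by (rule linI) (simp_all add: fun_eq_iff smult_ser_monom algebra_simps)

lemma smult_ser_monom_eq_0: "smult_ser (monom e) f = 0 \<Longrightarrow> f = 0"
proof
  fix c assume "smult_ser (monom e) f = 0"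
  then have "smult_ser (monom e) f (madd c e) = 0" by simp
  then show "f c = 0 c" by (simp add: smult_ser_monom)
qed

text \<open>The condition in the definition of \<^const>\<open>qdim\<close> is \<open>indep_mod X id W\<close>.\<close>

definition indep_mod :: "'a set \<Rightarrow> ('a \<Rightarrow> mon \<Rightarrow> 'k::field) \<Rightarrow> (mon \<Rightarrow> 'k) set \<Rightarrow> bool" where
  "indep_mod X v W \<longleftrightarrow> (\<forall>c. (\<Sum>x\<in>X. fscale (c x) (v x)) \<in> W \<longrightarrow> (\<forall>x\<in>X. c x = 0))"

lemma indep_modD:
  "indep_mod X v W \<Longrightarrow> (\<Sum>x\<in>X. fscale (c x) (v x)) \<in> W \<Longrightarrow> x \<in> X \<Longrightarrow> c x = 0"
  unfolding indep_mod_def by blast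

lemma indep_modI:
  "(\<And>c. (\<Sum>x\<in>X. fscale (c x) (v x)) \<in> W \<Longrightarrow> \<forall>x\<in>X. c x = 0) \<Longrightarrow> indep_mod X v W"
  unfolding indep_mod_def by blast

lemma indep_mod_mono: "indep_mod X v W \<Longrightarrow> W' \<subseteq> W \<Longrightarrow> indep_mod X v W'"
  unfolding indep_mod_def by blast

lemma qdim_eq: "qdim V W = Sup {card X | X. finite X \<and> X \<subseteq> V \<and> indep_mod X id W}"
  unfolding qdim_def indep_mod_def sum_fscale_eq by simp

lemma indep_mod_zero_inj:
  fixes v :: "'a \<Rightarrow> mon \<Rightarrow> 'k::field"
  assumes "finite X" "indep_mod X v {0}"
  shows "inj_on v X"
proof (rule inj_onI, rule ccontr)
  fix x y assume xy: "x \<in> X" "y \<in> X" "v x = v y" "x \<noteq> y"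
  let ?c = "\<lambda>z. if z = x then 1 else if z = y then -1 else (0::'k)"
  have "(\<Sum>z\<in>X. fscale (?c z) (v z))
      = (\<Sum>z\<in>X. (if z = x then v x else 0) + (if z = y then - v y else 0))"
    using xy(4) by (intro sum.cong) (auto simp: fun_eq_iff)
  also have "\<dots> = 0" using assms(1) xy by (simp add: sum.distrib sum.delta)
  finally show False using indep_modD[OF assms(2) _ xy(1), of ?c] by simp
qed

lemma indep_mod_zero_independent:
  assumes "finite X" "indep_mod X v {0}"
  shows "vs.independent (v ` X)"
proof (rule vs.independent_if_scalars_zero)
  show "finite (v ` X)" using assms(1) by simp
  fix f y assume s: "(\<Sum>x\<in>v ` X. fscale (f x) x) = 0" and y: "y \<in> v ` X"
  have "(\<Sum>x\<in>X. fscale (f (v x)) (v x)) = 0"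
    using s by (simp add: sum.reindex[OF indep_mod_zero_inj[OF assms]])
  then show "f y = 0" using indep_modD[OF assms(2)] y by auto
qed

lemma indep_mod_zero_card:
  "finite X \<Longrightarrow> indep_mod X v {0} \<Longrightarrow> card (v ` X) = card X"
  by (rule card_image[OF indep_mod_zero_inj])

lemma indep_mod_zeroI:
  assumes "finite X" "inj_on v X" "vs.independent (v ` X)"
  shows "indep_mod X v {0}"
proof (rule indep_modI)
  fix c assume "(\<Sum>x\<in>X. fscale (c x) (v x)) \<in> {0}"
  then have "(\<Sum>y\<in>v ` X. fscale (c (the_inv_into X v y)) y) = 0"
    by (simp add: sum.reindex[OF assms(2)] the_inv_into_f_f[OF assms(2)])
  then have "\<forall>y\<in>v ` X. c (the_inv_into X v y) = 0"
    using vs.independentD[OF assms(3) finite_imageI[OF assms(1)] subset_refl,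
        of "\<lambda>y. c (the_inv_into X v y)"] by blast
  then show "\<forall>x\<in>X. c x = 0"
    using the_inv_into_f_f[OF assms(2)] by fastforce
qed

lemma indep_mod_not_mem:
  assumes "finite X" "indep_mod X v W" "x \<in> X"
  shows "v x \<notin> W"
proof
  assume "v x \<in> W"
  moreover have "(\<Sum>y\<in>X. fscale (if y = x then 1 else 0) (v y)) = v x"
    using assms(1,3) by (simp add: if_distrib[of "\<lambda>c. fscale c _"] sum.delta' cong: if_cong)
  ultimately show False using indep_modD[OF assms(2) _ assms(3), of "\<lambda>y. if y = x then 1 else 0"] by simp
qed

lemma span_imageE:
  fixes v :: "'a \<Rightarrow> mon \<Rightarrow> 'k::field"
  assumes "finite X" "inj_on v X" "y \<in> vs.span (v ` X)"
  obtains c where "y = (\<Sum>x\<in>X. fscale (c x) (v x))"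
proof -
  obtain u where "y = (\<Sum>z\<in>v ` X. fscale (u z) z)"
    using vs.span_finite[OF finite_imageI[OF assms(1)]] assms(3) by auto
  then show ?thesis using that[of "u \<circ> v"] by (simp add: sum.reindex[OF assms(2)])
qed

lemma lin_indep_mod_Diff:
  fixes B C :: "(mon \<Rightarrow> 'k::field) set"
  assumes L: "lin L" and B: "finite B" "vs.independent B" and CB: "C \<subseteq> B"
    and ker: "\<And>x. x \<in> vs.span B \<Longrightarrow> L x = 0 \<Longrightarrow> x \<in> vs.span C"
  shows "indep_mod (B - C) L {0}"
proof (rule indep_modI)
  fix c assume "(\<Sum>x\<in>B - C. fscale (c x) (L x)) \<in> {0}"
  then have "L (\<Sum>x\<in>B - C. fscale (c x) x) = 0"
    by (simp add: vsp.linear_sum[OF L] vsp.linear_scale[OF L])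
  moreover have "(\<Sum>x\<in>B - C. fscale (c x) x) \<in> vs.span B"
    by (intro vs.span_sum vs.span_scale vs.span_base) auto
  ultimately have "(\<Sum>x\<in>B - C. fscale (c x) x) \<in> vs.span C"
    using ker by blast
  then obtain u where u: "(\<Sum>x\<in>B - C. fscale (c x) x) = (\<Sum>x\<in>C. fscale (u x) x)"
    using vs.span_finite[OF finite_subset[OF CB B(1)]] by auto
  define w where "w x = (if x \<in> C then - u x else c x)" for x
  have "(\<Sum>x\<in>B. fscale (w x) x) = (\<Sum>x\<in>B - C. fscale (w x) x) + (\<Sum>x\<in>C. fscale (w x) x)"
    using sum.subset_diff[OF CB B(1)] .
  also have "\<dots> = (\<Sum>x\<in>B - C. fscale (c x) x) - (\<Sum>x\<in>C. fscale (u x) x)"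
  proof -
    have "(\<Sum>x\<in>B - C. fscale (w x) x) = (\<Sum>x\<in>B - C. fscale (c x) x)"
      by (rule sum.cong) (simp_all add: w_def)
    moreover have "(\<Sum>x\<in>C. fscale (w x) x) = (\<Sum>x\<in>C. - fscale (u x) x)"
      by (rule sum.cong) (simp_all add: w_def vs.scale_minus_left)
    ultimately show ?thesis by (simp only: sum_negf diff_conv_add_uminus)
  qed
  also have "\<dots> = 0" using u by simp
  finally have "\<forall>x\<in>B. w x = 0"
    using vs.independentD[OF B(2) B(1) subset_refl] by blast
  then show "\<forall>x\<in>B - C. c x = 0" unfolding w_def by force
qed

lemma lin_indep_mod_if_kernel_0:
  assumes "lin L" "finite B" "vs.independent B" "\<And>x. x \<in> vs.span B \<Longrightarrow> L x = 0 \<Longrightarrow> x = 0"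
  shows "indep_mod B L {0}"
  using lin_indep_mod_Diff[OF assms(1-3) empty_subsetI] assms(4) by simp

text \<open>Rank--nullity, in the form of an independent set mapped injectively onto an
  independent set.\<close>

lemma rank_nullity_indep_mod:
  fixes L :: "(mon \<Rightarrow> 'k::field) \<Rightarrow> mon \<Rightarrow> 'k"
  assumes L: "lin L" and B: "finite B" "vs.independent B"
    and ker: "\<And>K. K \<subseteq> vs.span B \<Longrightarrow> \<forall>x\<in>K. L x = 0 \<Longrightarrow> vs.independent K \<Longrightarrow> card K \<le> k"
  obtains R where "finite R" "R \<subseteq> vs.span B" "card B \<le> card R + k" "indep_mod R L {0}"
proof -
  let ?K = "{x \<in> vs.span B. L x = 0}"
  obtain C where C: "C \<subseteq> ?K" "vs.independent C" "?K \<subseteq> vs.span C"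
    by (rule vs.maximal_independent_subset)
  have CB: "C \<subseteq> vs.span B" using C(1) by blast
  have fC: "finite C" and cC: "card C \<le> k"
    using vs.independent_span_bound[OF B(1) C(2) CB] ker[OF CB _ C(2)] C(1) by auto
  obtain B' where B': "C \<subseteq> B'" "B' \<subseteq> vs.span B" "vs.independent B'" "vs.span B \<subseteq> vs.span B'"
    using vs.maximal_independent_subset_extend[OF CB C(2)] by blast
  have fB': "finite B'" using vs.independent_span_bound[OF B(1) B'(3,2)] by simp
  have "card B \<le> card B'"
    using vs.independent_span_bound[OF fB' B(2)] B'(4) vs.span_superset by blast
  moreover have "card B' = card (B' - C) + card C"
    using card_Diff_subset[OF fC B'(1)] card_mono[OF fB' B'(1)] by simp
  moreover have "indep_mod (B' - C) L {0}"
  proof (rule lin_indep_mod_Diff[OF L fB' B'(3,1)])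
    fix x assume "x \<in> vs.span B'" "L x = 0"
    moreover have "vs.span B' \<subseteq> vs.span B"
      using B'(2) vs.span_minimal vs.subspace_span by blast
    ultimately show "x \<in> vs.span C" using C(3) by blast
  qed
  ultimately show ?thesis
    using that[of "B' - C"] fB' B'(2) cC by auto
qed

section \<open>Quotient dimensions\<close>

lemma mpow_eq_0: "f \<in> mpow i \<Longrightarrow> mdeg a < i \<Longrightarrow> f a = 0"
  unfolding mpow_def by blast

lemma subspace_mpow: "vs.subspace (mpow i)"
  unfolding vs.subspace_def mpow_def by (auto simp: zero_fun_def)

lemma zero_mem_mpow [simp]: "0 \<in> mpow i"
  using vs.subspace_0[OF subspace_mpow] .

lemma mpow_antimono: "i \<le> j \<Longrightarrow> mpow j \<subseteq> mpow i"
  unfolding mpow_def by auto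

lemma mpow_lincomb:
  "(\<And>x. x \<in> X \<Longrightarrow> v x \<in> mpow i) \<Longrightarrow> (\<Sum>x\<in>X. fscale (c x) (v x)) \<in> mpow i"
  by (intro vs.subspace_sum[OF subspace_mpow] vs.subspace_scale[OF subspace_mpow])

lemma span_monom:
  fixes u :: "mon \<Rightarrow> 'k::field"
  assumes "finite T" "\<And>m. u m \<noteq> 0 \<Longrightarrow> m \<in> T"
  shows "u \<in> vs.span (monom ` T)"
proof -
  have "u = (\<Sum>m\<in>T. fscale (u m) (monom m))"
  proof
    fix m'
    have "(\<Sum>m\<in>T. fscale (u m) (monom m)) m' = (\<Sum>m\<in>T. if m' = m then u m else 0)"
      by (auto simp: sum_apply monom_def intro!: sum.cong)
    also have "\<dots> = u m'" using assms by (simp add: sum.delta) metis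
    finally show "u m' = (\<Sum>m\<in>T. fscale (u m) (monom m)) m'" by simp
  qed
  also have "\<dots> \<in> vs.span (monom ` T)"
    by (intro vs.span_sum vs.span_scale vs.span_base) auto
  finally show ?thesis .
qed

lemma independent_monom:
  assumes "finite T"
  shows "vs.independent (monom ` T :: (mon \<Rightarrow> 'k::field) set)"
proof (rule vs.independent_if_scalars_zero)
  show "finite (monom ` T :: (mon \<Rightarrow> 'k) set)" using assms by simp
  fix f :: "(mon \<Rightarrow> 'k) \<Rightarrow> 'k" and x :: "mon \<Rightarrow> 'k" assume s: "(\<Sum>x\<in>monom ` T. fscale (f x) x) = 0"
    and x: "x \<in> monom ` T"
  obtain m where m: "m \<in> T" "x = monom m" using x by blast
  have inj: "inj_on (monom :: mon \<Rightarrow> mon \<Rightarrow> 'k) T" using inj_monom by (rule inj_on_subset) simp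
  have "0 = (\<Sum>m'\<in>T. f (monom m') * monom m' m)"
    using fun_cong[OF s, of m] by (simp add: sum_apply sum.reindex[OF inj])
  also have "\<dots> = (\<Sum>m'\<in>T. if m' = m then f (monom m) else 0)"
    by (rule sum.cong) (auto simp: monom_def)
  also have "\<dots> = f (monom m)" using m(1) assms by (simp add: sum.delta')
  finally show "f x = 0" using m by simp
qed

text \<open>This bound makes the suprema defining \<^const>\<open>qdim\<close> finite, hence attained.\<close>

lemma indep_mod_card_le_mpow:
  fixes X :: "(mon \<Rightarrow> 'k::field) set"
  assumes W: "mpow N \<subseteq> W" and X: "finite X" "indep_mod X id W"
  shows "card X \<le> card {m::mon. mdeg m < N}"
proof -
  define T where "T = {m::mon. mdeg m < N}"
  have fT: "finite T" unfolding T_def by (rule finite_mdeg_less)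
  define tr :: "(mon \<Rightarrow> 'k) \<Rightarrow> mon \<Rightarrow> 'k" where
    "tr f = (\<lambda>m. if mdeg m < N then f m else 0)" for f
  have "indep_mod X tr {0}"
  proof (rule indep_modI)
    fix c assume "(\<Sum>x\<in>X. fscale (c x) (tr x)) \<in> {0}"
    then have h: "(\<Sum>x\<in>X. fscale (c x) (tr x)) = 0" by simp
    have "(\<Sum>x\<in>X. c x * x m) = 0" if "mdeg m < N" for m
      using fun_cong[OF h, of m] that by (simp add: sum_apply tr_def)
    then have "(\<Sum>x\<in>X. fscale (c x) (id x)) \<in> W"
      using W by (auto simp: mpow_def sum_fscale_eq)
    then show "\<forall>x\<in>X. c x = 0" using indep_modD[OF X(2)] by blast
  qed
  then have card: "card (tr ` X) = card X" and indep: "vs.independent (tr ` X)"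
    using indep_mod_zero_card[OF X(1)] indep_mod_zero_independent[OF X(1)] by auto
  have "tr ` X \<subseteq> vs.span (monom ` T)"
  proof
    fix u assume "u \<in> tr ` X"
    then have "\<And>m. u m \<noteq> 0 \<Longrightarrow> m \<in> T" by (auto simp: tr_def T_def split: if_splits)
    then show "u \<in> vs.span (monom ` T)" by (rule span_monom[OF fT])
  qed
  then have "card (tr ` X) \<le> card (monom ` T :: (mon \<Rightarrow> 'k) set)"
    using vs.independent_span_bound[OF finite_imageI[OF fT] indep] by blast
  also have "\<dots> \<le> card T" using fT by (rule card_image_le)
  finally show ?thesis using card by (simp add: T_def)
qed

lemma qdim_attained:
  fixes V W :: "(mon \<Rightarrow> 'k::field) set"
  assumes W: "mpow N \<subseteq> W"
  obtains X where "finite X" "X \<subseteq> V" "indep_mod X id W" "card X = qdim V W"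
proof -
  define S where "S = {card X | X :: (mon \<Rightarrow> 'k) set. finite X \<and> X \<subseteq> V \<and> indep_mod X id W}"
  have "S \<subseteq> {..card {m::mon. mdeg m < N}}"
    unfolding S_def using indep_mod_card_le_mpow[OF W] by auto
  then have "finite S" using finite_subset by blast
  moreover have "0 \<in> S"
    unfolding S_def by (rule CollectI, rule exI[of _ "{}"]) (simp add: indep_mod_def)
  ultimately have "Sup S \<in> S" by (simp add: cSup_eq_Max ex_in_conv[symmetric] exI)
  then show ?thesis using that unfolding qdim_eq S_def[symmetric] by (auto simp: S_def)
qed

lemma qdim_ge:
  fixes v :: "'a \<Rightarrow> mon \<Rightarrow> 'k::field"
  assumes W: "mpow N \<subseteq> W" and X: "finite X" "v ` X \<subseteq> V" "indep_mod X v W"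
  shows "card X \<le> qdim V W"
proof -
  have inj: "inj_on v X"
    using indep_mod_zero_inj[OF X(1) indep_mod_mono[OF X(3)]] W zero_mem_mpow by blast
  have "indep_mod (v ` X) id W"
  proof (rule indep_modI)
    fix c assume "(\<Sum>y\<in>v ` X. fscale (c y) (id y)) \<in> W"
    then show "\<forall>y\<in>v ` X. c y = 0"
      using indep_modD[OF X(3), of "c \<circ> v"] by (simp add: sum.reindex[OF inj])
  qed
  then have "card (v ` X) \<le> qdim V W"
    unfolding qdim_eq using X(1,2) indep_mod_card_le_mpow[OF W]
    by (intro cSup_upper bdd_aboveI[of _ "card {m::mon. mdeg m < N}"]) auto
  then show ?thesis using card_image[OF inj] by simp
qed

section \<open>The subspaces \<open>C_B(u)\<close>\<close>

definition deg_below :: "nat \<Rightarrow> (mon \<Rightarrow> 'k::zero) \<Rightarrow> bool" where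
  "deg_below k X \<longleftrightarrow> (\<forall>c. k \<le> mdeg c \<longrightarrow> X c = 0)"

lemma deg_below_add:
  fixes X Y :: "mon \<Rightarrow> 'k::field"
  shows "deg_below k X \<Longrightarrow> deg_below k Y \<Longrightarrow> deg_below k (X + Y)"
  by (simp add: deg_below_def)

lemma deg_below_fscale: "deg_below k X \<Longrightarrow> deg_below k (fscale c X)"
  by (simp add: deg_below_def)

lemma deg_below_lincomb:
  assumes "\<And>x. x \<in> X \<Longrightarrow> deg_below k (v x)"
  shows "deg_below k (\<Sum>x\<in>X. fscale (c x) (v x))"
  using assms by (simp add: deg_below_def sum_fscale_eq)

lemma colon_pre_iff:
  fixes G :: "mon \<Rightarrow> 'k::field"
  assumes G: "dp_poly G"
  shows "f \<in> colon_pre G k \<longleftrightarrow> deg_below k (contract f G)"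
proof
  assume f: "f \<in> colon_pre G k"
  show "deg_below k (contract f G)" unfolding deg_below_def
  proof (intro allI impI)
    fix c assume "k \<le> mdeg c"
    then have "monom c \<in> mpow k" by (auto simp: mpow_def monom_def)
    then have "smult_ser f (monom c) \<in> ann G" using f unfolding colon_pre_def by blast
    then have "contract (smult_ser f (monom c)) G = 0" by (simp add: ann_def zero_fun_def)
    then have "contract (monom c) (contract f G) (0,0,0,0) = 0"
      by (simp only: contract_smult_ser[OF G] zero_fun_def)
    then show "contract f G c = 0"
      by (simp only: contract_monom[OF dp_poly_contract[OF G]] madd_zero_left)
  qed
next
  assume low: "deg_below k (contract f G)"
  show "f \<in> colon_pre G k" unfolding colon_pre_def
  proof (intro CollectI ballI)
    fix h :: "mon \<Rightarrow> 'k" assume h: "h \<in> mpow k"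
    have "contract h (contract f G) c = 0" for c
    proof (rule contract_eq_0I)
      fix b assume b: "contract f G b \<noteq> 0" "mle c b"
      have "mdeg b < k" using low b(1) unfolding deg_below_def by (meson not_le)
      moreover have "mdeg (msub b c) \<le> mdeg b" using mdeg_msub[OF b(2)] by simp
      ultimately show "h (msub b c) = 0" using h mpow_eq_0 le_less_trans by blast
    qed
    then show "smult_ser f h \<in> ann G"
      by (simp add: ann_def contract_smult_ser[OF G] fun_eq_iff)
  qed
qed

lemma ssum_iff: "F \<in> ssum A B \<longleftrightarrow> (\<exists>a b. F = (\<lambda>c. a c + b c) \<and> a \<in> A \<and> b \<in> B)"
  by (simp add: ssum_def)

lemma ann_iff: "f \<in> ann G \<longleftrightarrow> contract f G = 0"
  by (simp add: ann_def zero_fun_def)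

lemma C_pre_iff:
  fixes G :: "mon \<Rightarrow> 'k::field"
  assumes G: "dp_poly G"
  shows "F \<in> C_pre G u i \<longleftrightarrow> (\<exists>a m. a \<in> mpow i \<and> deg_below (dp_deg G + 1 - u - i) (contract a G)
      \<and> m \<in> mpow (Suc i) \<and> contract F G = contract a G + contract m G)"
    (is "_ \<longleftrightarrow> (\<exists>a m. ?P a m)")
proof
  let ?k = "dp_deg G + 1 - u - i"
  assume "F \<in> C_pre G u i"
  then obtain x n where F: "F = (\<lambda>c. x c + n c)" and n: "n \<in> ann G"
    and x: "x \<in> ssum (mB_pow_pre G i \<inter> colon_pre G ?k) (mpow (i+1))"
    unfolding C_pre_def ssum_iff[of F] by blast
  from x obtain a m where x: "x = (\<lambda>c. a c + m c)" and m: "m \<in> mpow (i+1)"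
    and a: "a \<in> mB_pow_pre G i" "a \<in> colon_pre G ?k"
    unfolding ssum_iff[of x] by blast
  from a(1) obtain p n' where a': "a = (\<lambda>c. p c + n' c)" and p: "p \<in> mpow i" and n': "n' \<in> ann G"
    unfolding mB_pow_pre_def ssum_iff[of a] by blast
  have "F = p + m + (n' + n)" "a = p + n'" using F x a' by (simp_all add: fun_eq_iff)
  then have "contract F G = contract p G + contract m G" "contract a G = contract p G"
    using n n' by (simp_all add: contract_add ann_iff)
  then have "?P p m" using p m a(2) colon_pre_iff[OF G] by auto
  then show "\<exists>a m. ?P a m" by blast
next
  assume "\<exists>a m. ?P a m"
  then obtain a m where a: "a \<in> mpow i" "deg_below (dp_deg G + 1 - u - i) (contract a G)"
    and m: "m \<in> mpow (Suc i)" and F: "contract F G = contract a G + contract m G"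
    by blast
  have "a \<in> mB_pow_pre G i"
    unfolding mB_pow_pre_def ssum_iff using a(1)
    by (intro exI[of _ a] exI[of _ 0] conjI) (simp_all add: ann_iff)
  moreover have "a \<in> colon_pre G (dp_deg G + 1 - u - i)"
    using a(2) colon_pre_iff[OF G] by simp
  ultimately have x: "(\<lambda>c. a c + m c) \<in> ssum (mB_pow_pre G i \<inter> colon_pre G (dp_deg G + 1 - u - i)) (mpow (i+1))"
    unfolding ssum_iff using m by auto
  have n: "F - (a + m) \<in> ann G"
    using F by (simp add: ann_iff contract_diff contract_add)
  show "F \<in> C_pre G u i"
    unfolding C_pre_def ssum_iff[of F]
  proof (intro exI conjI)
    show "F = (\<lambda>c. (a c + m c) + (F - (a + m)) c)" by (simp add: fun_eq_iff)
  qed (fact x n)+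
qed

lemma C_pre_E:
  fixes G :: "mon \<Rightarrow> 'k::field"
  assumes "dp_poly G" "F \<in> C_pre G u i"
  obtains a m where "a \<in> mpow i" "deg_below (dp_deg G + 1 - u - i) (contract a G)"
    "m \<in> mpow (Suc i)" "contract F G = contract a G + contract m G"
  using assms C_pre_iff by blast

lemma C_pre_I:
  fixes G :: "mon \<Rightarrow> 'k::field"
  assumes "dp_poly G" "a \<in> mpow i" "deg_below (dp_deg G + 1 - u - i) (contract a G)"
    "m \<in> mpow (Suc i)" "contract F G = contract a G + contract m G"
  shows "F \<in> C_pre G u i"
  using assms C_pre_iff by blast

lemma mem_C_pre:
  fixes G :: "mon \<Rightarrow> 'k::field"
  assumes "dp_poly G" "a \<in> mpow i" "deg_below (dp_deg G + 1 - u - i) (contract a G)"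
  shows "a \<in> C_pre G u i"
  using C_pre_I[OF assms zero_mem_mpow] by simp

lemma mpow_subset_C_pre:
  fixes G :: "mon \<Rightarrow> 'k::field"
  assumes "dp_poly G"
  shows "mpow (Suc i) \<subseteq> C_pre G u i"
proof
  fix m :: "mon \<Rightarrow> 'k" assume "m \<in> mpow (Suc i)"
  from C_pre_I[OF assms zero_mem_mpow _ this] show "m \<in> C_pre G u i"
    by (simp add: deg_below_def)
qed

lemma subspace_C_pre:
  fixes G :: "mon \<Rightarrow> 'k::field"
  assumes G: "dp_poly G"
  shows "vs.subspace (C_pre G u i)"
  unfolding vs.subspace_def
proof (intro conjI ballI allI)
  show "0 \<in> C_pre G u i" using mpow_subset_C_pre[OF G] zero_mem_mpow by blast
next
  let ?k = "dp_deg G + 1 - u - i"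
  fix F1 F2 assume F1: "F1 \<in> C_pre G u i" and F2: "F2 \<in> C_pre G u i"
  obtain a1 m1 where 1: "a1 \<in> mpow i" "deg_below ?k (contract a1 G)" "m1 \<in> mpow (Suc i)"
    "contract F1 G = contract a1 G + contract m1 G"
    using C_pre_E[OF G F1] by blast
  obtain a2 m2 where 2: "a2 \<in> mpow i" "deg_below ?k (contract a2 G)" "m2 \<in> mpow (Suc i)"
    "contract F2 G = contract a2 G + contract m2 G"
    using C_pre_E[OF G F2] by blast
  show "F1 + F2 \<in> C_pre G u i"
  proof (rule C_pre_I[OF G])
    show "a1 + a2 \<in> mpow i" "m1 + m2 \<in> mpow (Suc i)"
      using 1 2 by (simp_all add: vs.subspace_add[OF subspace_mpow])
    show "deg_below ?k (contract (a1 + a2) G)"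
      using 1 2 by (simp add: contract_add deg_below_add)
    show "contract (F1 + F2) G = contract (a1 + a2) G + contract (m1 + m2) G"
      using 1 2 by (simp add: contract_add ac_simps)
  qed
next
  let ?k = "dp_deg G + 1 - u - i"
  fix c F assume F: "F \<in> C_pre G u i"
  obtain a m where am: "a \<in> mpow i" "deg_below ?k (contract a G)" "m \<in> mpow (Suc i)"
    "contract F G = contract a G + contract m G"
    using C_pre_E[OF G F] by blast
  show "fscale c F \<in> C_pre G u i"
  proof (rule C_pre_I[OF G])
    show "fscale c a \<in> mpow i" "fscale c m \<in> mpow (Suc i)"
      using am by (simp_all add: vs.subspace_scale[OF subspace_mpow])
    show "deg_below ?k (contract (fscale c a) G)"
      using am by (simp add: contract_fscale deg_below_fscale)
    show "contract (fscale c F) G = contract (fscale c a) G + contract (fscale c m) G"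
      using am by (simp add: contract_fscale vs.scale_right_distrib)
  qed
qed

lemma C_pre_representative:
  fixes G :: "mon \<Rightarrow> 'k::field"
  assumes G: "dp_poly G" and F: "F \<in> C_pre G u i"
  obtains a where "a \<in> mpow i" "deg_below (dp_deg G + 1 - u - i) (contract a G)"
    "F - a \<in> C_pre G (Suc u) i"
proof -
  obtain a m where am: "a \<in> mpow i" "deg_below (dp_deg G + 1 - u - i) (contract a G)"
    "m \<in> mpow (Suc i)" "contract F G = contract a G + contract m G"
    using C_pre_E[OF G F] by blast
  have "F - a \<in> C_pre G (Suc u) i"
    by (rule C_pre_I[OF G zero_mem_mpow _ am(3)]) (simp_all add: am(4) contract_diff deg_below_def)
  then show ?thesis using that am(1,2) by blast
qed

lemma HB_representatives:
  fixes G :: "mon \<Rightarrow> 'k::field"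
  assumes G: "dp_poly G"
  obtains X :: "(mon \<Rightarrow> 'k) set" and a where "finite X" "card X = HB G u i"
    "\<And>x. x \<in> X \<Longrightarrow> a x \<in> mpow i"
    "\<And>x. x \<in> X \<Longrightarrow> deg_below (dp_deg G + 1 - u - i) (contract (a x) G)"
    "indep_mod X a (C_pre G (Suc u) i)"
proof -
  let ?k = "dp_deg G + 1 - u - i" and ?W = "C_pre G (Suc u) i"
  obtain X where X: "finite X" "X \<subseteq> C_pre G u i" "indep_mod X id ?W" "card X = HB G u i"
    using qdim_attained[OF mpow_subset_C_pre[OF G]] unfolding HB_def by blast
  have "\<forall>x\<in>X. \<exists>a. a \<in> mpow i \<and> deg_below ?k (contract a G) \<and> x - a \<in> ?W"
    using C_pre_representative[OF G] X(2) by blast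
  then obtain a where a: "\<forall>x\<in>X. a x \<in> mpow i \<and> deg_below ?k (contract (a x) G) \<and> x - a x \<in> ?W"
    by (rule bchoice[THEN exE])
  have "indep_mod X a ?W"
  proof (rule indep_modI)
    fix c assume "(\<Sum>x\<in>X. fscale (c x) (a x)) \<in> ?W"
    moreover have "(\<Sum>x\<in>X. fscale (c x) (x - a x)) \<in> ?W"
      using a by (intro vs.subspace_sum[OF subspace_C_pre[OF G]] vs.subspace_scale[OF subspace_C_pre[OF G]]) blast
    ultimately have "(\<Sum>x\<in>X. fscale (c x) (a x)) + (\<Sum>x\<in>X. fscale (c x) (x - a x)) \<in> ?W"
      by (rule vs.subspace_add[OF subspace_C_pre[OF G]])
    moreover have "(\<Sum>x\<in>X. fscale (c x) (a x)) + (\<Sum>x\<in>X. fscale (c x) (x - a x))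
        = (\<Sum>x\<in>X. fscale (c x) (id x))"
      by (simp add: sum.distrib[symmetric] vs.scale_right_diff_distrib)
    ultimately show "\<forall>x\<in>X. c x = 0" using indep_modD[OF X(3)] by auto
  qed
  then show ?thesis using that[of X a] X(1,4) a by blast
qed

lemma HB_ge:
  fixes G :: "mon \<Rightarrow> 'k::field" and v :: "'a \<Rightarrow> mon \<Rightarrow> 'k"
  assumes "dp_poly G" "finite X" "v ` X \<subseteq> C_pre G u i" "indep_mod X v (C_pre G (Suc u) i)"
  shows "card X \<le> HB G u i"
  unfolding HB_def by (rule qdim_ge[OF mpow_subset_C_pre[OF assms(1)] assms(2-4)])

section \<open>Homogeneous components and the subring \<open>\<DD>\<close>\<close>

definition homog :: "nat \<Rightarrow> (mon \<Rightarrow> 'k::zero) \<Rightarrow> bool" where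
  "homog d f \<longleftrightarrow> (\<forall>m. f m \<noteq> 0 \<longrightarrow> mdeg m = d)"

definition hcomp :: "nat \<Rightarrow> (mon \<Rightarrow> 'k::zero) \<Rightarrow> mon \<Rightarrow> 'k" where
  "hcomp d f = (\<lambda>m. if mdeg m = d then f m else 0)"

definition xy_only :: "(mon \<Rightarrow> 'k::zero) \<Rightarrow> bool" where
  "xy_only f \<longleftrightarrow> (\<forall>m. zw_deg m \<noteq> 0 \<longrightarrow> f m = 0)"

definition xy_part :: "(mon \<Rightarrow> 'k::zero) \<Rightarrow> mon \<Rightarrow> 'k" where
  "xy_part f = (\<lambda>m. if zw_deg m = 0 then f m else 0)"

definition zw_part :: "(mon \<Rightarrow> 'k::zero) \<Rightarrow> mon \<Rightarrow> 'k" where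
  "zw_part f = (\<lambda>m. if zw_deg m = 0 then 0 else f m)"

lemma homog_iff: "homog d f \<longleftrightarrow> (\<forall>m. mdeg m \<noteq> d \<longrightarrow> f m = 0)"
  unfolding homog_def by blast

lemma homogD: "homog d f \<Longrightarrow> f m \<noteq> 0 \<Longrightarrow> mdeg m = d"
  unfolding homog_def by blast

lemma homog_eq_0: "homog d f \<Longrightarrow> mdeg m \<noteq> d \<Longrightarrow> f m = 0"
  unfolding homog_def by blast

lemma xy_onlyD: "xy_only f \<Longrightarrow> zw_deg m \<noteq> 0 \<Longrightarrow> f m = 0"
  unfolding xy_only_def by blast

lemma xy_only_iff_zw_part: "xy_only f \<longleftrightarrow> zw_part f = 0"
  by (auto simp: xy_only_def zw_part_def fun_eq_iff)

lemma homog_hcomp [simp]: "homog d (hcomp d f)"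
  by (simp add: homog_def hcomp_def)

lemma homog_hcomp_eq: "homog d X \<Longrightarrow> hcomp d X = X"
  by (auto simp: hcomp_def fun_eq_iff homog_iff)

lemma homog_hcomp_other: "homog d X \<Longrightarrow> e \<noteq> d \<Longrightarrow> hcomp e X = 0"
  by (auto simp: hcomp_def fun_eq_iff homog_iff)

lemma homog_imp_mpow: "homog d f \<Longrightarrow> i \<le> d \<Longrightarrow> f \<in> mpow i"
  unfolding mpow_def homog_def by force

lemma hcomp_eq_0: "f \<in> mpow i \<Longrightarrow> d < i \<Longrightarrow> hcomp d f = 0"
  by (auto simp: hcomp_def fun_eq_iff mpow_def)

lemma lin_hcomp: "lin (hcomp d)"
  by (rule linI) (simp_all add: hcomp_def fun_eq_iff)

lemma lin_zw_part: "lin zw_part"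
  by (rule linI) (simp_all add: zw_part_def fun_eq_iff)

lemma hcomp_contract_lincomb:
  "hcomp d (contract (\<Sum>x\<in>X. fscale (c x) (v x)) G) = (\<Sum>x\<in>X. fscale (c x) (hcomp d (contract (v x) G)))"
  by (simp add: contract_lincomb vsp.linear_sum[OF lin_hcomp] vsp.linear_scale[OF lin_hcomp])

lemma deg_below_SucI:
  assumes "hcomp k X = 0" "deg_below (Suc k) X"
  shows "deg_below k X"
  unfolding deg_below_def
proof (intro allI impI)
  fix c assume "k \<le> mdeg c"
  then consider "mdeg c = k" | "Suc k \<le> mdeg c" by linarith
  then show "X c = 0"
  proof cases
    case 1
    then show ?thesis using fun_cong[OF assms(1), of c] by (simp add: hcomp_def)
  qed (use assms(2) deg_below_def in blast)
qed

lemma hcomp_eq_0_if_deg_below: "deg_below k X \<Longrightarrow> k \<le> d \<Longrightarrow> hcomp d X = 0"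
  by (simp add: deg_below_def hcomp_def fun_eq_iff)

lemma homog_deg_below: "homog d X \<Longrightarrow> d < k \<Longrightarrow> deg_below k X"
  by (auto simp: deg_below_def homog_iff)

lemma contract_homog:
  assumes "homog d G" "homog e f"
  shows "homog (d - e) (contract f G)"
  unfolding homog_def
proof (intro allI impI)
  fix c assume "contract f G c \<noteq> 0"
  then obtain b where b: "G b \<noteq> 0" "mle c b" "f (msub b c) \<noteq> 0"
    by (rule contract_nonzeroE)
  then have "mdeg b = d" "mdeg (msub b c) = e"
    using homogD[OF assms(1)] homogD[OF assms(2)] by auto
  then show "mdeg c = d - e"
    using mdeg_msub[OF b(2)] mdeg_mono[OF b(2)] by linarith
qed

lemma contract_hcomp:
  assumes "homog d G"
  shows "contract f G c = contract (hcomp (d - mdeg c) f) G c"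
  unfolding contract_def
proof (rule sum.cong[OF refl])
  fix b assume "b \<in> {b. G b \<noteq> 0 \<and> mle c b}"
  then have "mdeg b = d" "mle c b" using homogD[OF assms] by auto
  then have "mdeg (msub b c) = d - mdeg c" using mdeg_msub by simp
  then show "f (msub b c) * G b = hcomp (d - mdeg c) f (msub b c) * G b"
    by (simp add: hcomp_def)
qed

lemma contract_mpow_eq_0:
  assumes "homog d G" "a \<in> mpow (Suc d)"
  shows "contract a G = 0"
proof
  fix c
  have "contract a G c = 0"
  proof (rule contract_eq_0I)
    fix b assume "G b \<noteq> 0" "mle c b"
    then have "mdeg (msub b c) < Suc d" using homogD[OF assms(1)] mdeg_msub by fastforce
    then show "a (msub b c) = 0" using mpow_eq_0[OF assms(2)] by blast
  qed
  then show "contract a G c = 0 c" by simp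
qed

lemma HB_eq_0_above_degree:
  fixes G :: "mon \<Rightarrow> 'k::field"
  assumes G: "dp_poly G" "homog d G" and "d < i"
  shows "HB G u i = 0"
proof -
  obtain X :: "(mon \<Rightarrow> 'k) set" and a where X: "finite X" "card X = HB G u i"
    "\<And>x. x \<in> X \<Longrightarrow> a x \<in> mpow i" "indep_mod X a (C_pre G (Suc u) i)"
    using HB_representatives[OF G(1)] by metis
  have "a x \<in> C_pre G (Suc u) i" if "x \<in> X" for x
  proof (rule mem_C_pre[OF G(1) X(3)[OF that]])
    have "a x \<in> mpow (Suc d)" using X(3)[OF that] \<open>d < i\<close> by (auto simp: mpow_def)
    then show "deg_below (dp_deg G + 1 - Suc u - i) (contract (a x) G)"
      by (simp add: contract_mpow_eq_0[OF G(2)] deg_below_def)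
  qed
  then have "X = {}" using indep_mod_not_mem[OF X(1,4)] by blast
  then show ?thesis using X(2) by simp
qed

lemma contract_xy_only:
  assumes "xy_only G"
  shows "xy_only (contract f G)"
  unfolding xy_only_def
proof (intro allI impI)
  fix c assume c: "zw_deg c \<noteq> 0"
  show "contract f G c = 0"
  proof (rule contract_eq_0I)
    fix b assume "G b \<noteq> 0" "mle c b"
    then have False using xy_onlyD[OF assms, of b] zw_deg_mono[of c b] c by auto
    then show "f (msub b c) = 0" ..
  qed
qed

lemma contract_xy_part:
  assumes "xy_only G"
  shows "contract f G = contract (xy_part f) G"
  unfolding contract_def
proof (rule ext, rule sum.cong[OF refl])
  fix c b assume b: "b \<in> {b. G b \<noteq> 0 \<and> mle c b}"
  then have "zw_deg b = 0" using xy_onlyD[OF assms, of b] by blast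
  then have "zw_deg (msub b c) = 0" using zw_deg_msub[of c b] b by simp
  then show "f (msub b c) * G b = xy_part f (msub b c) * G b" by (simp add: xy_part_def)
qed

section \<open>Binary forms\<close>

definition xy_forms :: "nat \<Rightarrow> (mon \<Rightarrow> 'k::field) set" where
  "xy_forms d = {f. homog d f \<and> xy_only f}"

definition xy_monos :: "nat \<Rightarrow> mon set" where
  "xy_monos d = (\<lambda>a. (a, d - a, 0, 0)) ` {..d}"

lemma mem_xy_monos: "m \<in> xy_monos d \<longleftrightarrow> mdeg m = d \<and> zw_deg m = 0"
  by (cases m) (auto simp: xy_monos_def)

lemma finite_xy_monos [simp]: "finite (xy_monos d)"
  by (simp add: xy_monos_def)

lemma card_xy_monos: "card (xy_monos d) = Suc d"
  unfolding xy_monos_def by (subst card_image) (auto intro: inj_onI)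

lemma xy_forms_support: "f \<in> xy_forms d \<Longrightarrow> f m \<noteq> 0 \<Longrightarrow> m \<in> xy_monos d"
  unfolding xy_forms_def mem_xy_monos using homogD xy_onlyD by blast

lemma xy_forms_eqI:
  assumes "f \<in> xy_forms d" "f' \<in> xy_forms d" "\<And>m. m \<in> xy_monos d \<Longrightarrow> f m = f' m"
  shows "f = f'"
proof
  fix m show "f m = f' m"
  proof (cases "m \<in> xy_monos d")
    case False
    then have "f m = 0" "f' m = 0"
      using xy_forms_support[OF assms(1)] xy_forms_support[OF assms(2)] by blast+
    then show ?thesis by simp
  qed (rule assms(3))
qed

lemma subspace_xy_forms: "vs.subspace (xy_forms d)"
  unfolding vs.subspace_def xy_forms_def homog_iff xy_only_def by auto

lemma monom_xy_forms: "m \<in> xy_monos d \<Longrightarrow> monom m \<in> xy_forms d"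
  unfolding xy_forms_def homog_def xy_only_def mem_xy_monos by (auto simp: monom_def)

lemma xy_part_hcomp: "xy_part (hcomp d f) \<in> xy_forms d"
  by (simp add: xy_forms_def homog_def xy_only_def xy_part_def hcomp_def)

lemma xy_forms_subset_span: "xy_forms d \<subseteq> vs.span (monom ` xy_monos d)"
  using span_monom[OF finite_xy_monos] xy_forms_support by blast

lemma card_monom_xy_monos: "card (monom ` xy_monos d :: (mon \<Rightarrow> 'k::field) set) = Suc d"
  using card_image[OF inj_on_subset[OF inj_monom subset_UNIV]] card_xy_monos by metis

lemma xy_forms_independent_card_le:
  fixes B :: "(mon \<Rightarrow> 'k::field) set"
  assumes "vs.independent B" "B \<subseteq> xy_forms d"
  shows "finite B \<and> card B \<le> Suc d"
proof -
  have "B \<subseteq> vs.span (monom ` xy_monos d)" using assms(2) xy_forms_subset_span by blast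
  then have "finite B \<and> card B \<le> card (monom ` xy_monos d :: (mon \<Rightarrow> 'k) set)"
    using vs.independent_span_bound[of "monom ` xy_monos d" B] assms(1) by simp
  then show ?thesis by (simp add: card_monom_xy_monos)
qed

lemma xy_forms_spanned:
  fixes B :: "(mon \<Rightarrow> 'k::field) set"
  assumes B: "vs.independent B" "B \<subseteq> xy_forms d" "card B = Suc d"
  shows "xy_forms d \<subseteq> vs.span B"
proof -
  have fB: "finite B" using xy_forms_independent_card_le[OF B(1,2)] by simp
  have "monom ` xy_monos d \<subseteq> vs.span B"
  proof
    fix t :: "mon \<Rightarrow> 'k" assume t: "t \<in> monom ` xy_monos d"
    show "t \<in> vs.span B"
    proof (rule ccontr)
      assume "t \<notin> vs.span B"
      then have "vs.independent (insert t B)" "t \<notin> B"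
        using vs.independent_insertI[OF _ B(1)] vs.span_base by auto
      moreover have "insert t B \<subseteq> xy_forms d"
        using t B(2) monom_xy_forms by blast
      ultimately show False
        using xy_forms_independent_card_le[of "insert t B" d] fB B(3) by simp
    qed
  qed
  then show ?thesis
    using xy_forms_subset_span vs.span_minimal[OF _ vs.subspace_span] by blast
qed

lemma xy_forms_indep_mod_spanned:
  fixes v :: "'a \<Rightarrow> mon \<Rightarrow> 'k::field"
  assumes "finite X" "indep_mod X v {0}" "v ` X \<subseteq> xy_forms d" "card X = Suc d"
  shows "xy_forms d \<subseteq> vs.span (v ` X)"
  using xy_forms_spanned[OF indep_mod_zero_independent[OF assms(1,2)] assms(3)]
    indep_mod_zero_card[OF assms(1,2)] assms(4) by simp

lemma lin_bij_betw_xy_forms: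
  fixes r :: "'a \<Rightarrow> mon \<Rightarrow> 'k::field"
  assumes L: "lin L" "L ` xy_forms d \<subseteq> xy_forms d"
    and X: "finite X" "card X = Suc d" "r ` X \<subseteq> xy_forms d" "indep_mod X (L \<circ> r) {0}"
  shows "bij_betw L (xy_forms d) (xy_forms d)"
proof -
  have "indep_mod X r {0}"
  proof (rule indep_modI)
    fix c assume "(\<Sum>x\<in>X. fscale (c x) (r x)) \<in> {0}"
    then have "L (\<Sum>x\<in>X. fscale (c x) (r x)) = 0" by (simp add: vsp.linear_0[OF L(1)])
    then have "(\<Sum>x\<in>X. fscale (c x) ((L \<circ> r) x)) \<in> {0}"
      by (simp add: vsp.linear_sum[OF L(1)] vsp.linear_scale[OF L(1)])
    then show "\<forall>x\<in>X. c x = 0" using indep_modD[OF X(4)] by blast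
  qed
  then have r_span: "xy_forms d \<subseteq> vs.span (r ` X)" and r_inj: "inj_on r X"
    using xy_forms_indep_mod_spanned[OF X(1) _ X(3,2)] indep_mod_zero_inj[OF X(1)] by auto
  have Lr_span: "xy_forms d \<subseteq> vs.span ((L \<circ> r) ` X)" and Lr_inj: "inj_on (L \<circ> r) X"
    using xy_forms_indep_mod_spanned[OF X(1,4) _ X(2)] L(2) X(3) indep_mod_zero_inj[OF X(1,4)]
    by (auto simp: image_comp[symmetric])
  have "inj_on L (xy_forms d)"
  proof (subst vsp.linear_inj_on_iff_eq_0[OF L(1) subspace_xy_forms], intro ballI impI)
    fix y assume "y \<in> xy_forms d" "L y = 0"
    then obtain c where c: "y = (\<Sum>x\<in>X. fscale (c x) (r x))"
      using span_imageE[OF X(1) r_inj] r_span by blast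
    then have "(\<Sum>x\<in>X. fscale (c x) ((L \<circ> r) x)) \<in> {0}"
      using \<open>L y = 0\<close> by (simp add: vsp.linear_sum[OF L(1)] vsp.linear_scale[OF L(1)])
    then have "\<forall>x\<in>X. c x = 0" using indep_modD[OF X(4)] by blast
    then show "y = 0" using c by simp
  qed
  moreover have "xy_forms d \<subseteq> L ` xy_forms d"
  proof
    fix w :: "mon \<Rightarrow> 'k" assume "w \<in> xy_forms d"
    then obtain c where c: "w = (\<Sum>x\<in>X. fscale (c x) ((L \<circ> r) x))"
      using span_imageE[OF X(1) Lr_inj] Lr_span by blast
    then have "w = L (\<Sum>x\<in>X. fscale (c x) (r x))"
      by (simp add: vsp.linear_sum[OF L(1)] vsp.linear_scale[OF L(1)])
    moreover have "(\<Sum>x\<in>X. fscale (c x) (r x)) \<in> xy_forms d"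
      using X(3) by (intro vs.subspace_sum[OF subspace_xy_forms] vs.subspace_scale[OF subspace_xy_forms]) auto
    ultimately show "w \<in> L ` xy_forms d" by blast
  qed
  ultimately show ?thesis using L(2) by (simp add: bij_betw_def)
qed

lemma smult_ser_monom_xy_forms:
  assumes f: "f \<in> xy_forms d" and e: "zw_deg e = 0"
  shows "smult_ser (monom e) f \<in> xy_forms (d + mdeg e)"
  unfolding xy_forms_def homog_def xy_only_def
proof (intro CollectI conjI allI impI)
  fix c assume "smult_ser (monom e) f c \<noteq> 0"
  then have "mle e c" "f (msub c e) \<noteq> 0" by (auto simp: smult_ser_monom split: if_splits)
  then show "mdeg c = d + mdeg e"
    using f homogD mdeg_msub mdeg_mono unfolding xy_forms_def by fastforce
next
  fix c assume c: "zw_deg c \<noteq> 0"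
  show "smult_ser (monom e) f c = 0"
  proof (cases "mle e c")
    case True
    then have "zw_deg (msub c e) \<noteq> 0" using c e zw_deg_msub by simp
    then have "f (msub c e) = 0" using f xy_onlyD unfolding xy_forms_def by blast
    then show ?thesis using True by (simp add: smult_ser_monom)
  qed (simp add: smult_ser_monom)
qed

lemma contract_inj_on_xy_forms_mono:
  fixes g :: "mon \<Rightarrow> 'k::field"
  assumes g: "dp_poly g" and inj: "inj_on (\<lambda>r. contract r g) (xy_forms d)" and "e \<le> d"
  shows "inj_on (\<lambda>r. contract r g) (xy_forms e)"
proof (subst vsp.linear_inj_on_iff_eq_0[OF lin_contract subspace_xy_forms], intro ballI impI)
  fix r assume r: "r \<in> xy_forms e" "contract r g = 0"
  define x where "x = smult_ser (monom (d - e, 0, 0, 0)) r"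
  have "x \<in> xy_forms d"
    using smult_ser_monom_xy_forms[OF r(1), of "(d - e, 0, 0, 0)"] \<open>e \<le> d\<close> by (simp add: x_def)
  moreover have "contract x g = 0"
    using r(2) by (simp add: x_def fun_eq_iff contract_smult_ser_monom[OF g])
  ultimately have "x = 0"
    using inj vsp.linear_inj_on_iff_eq_0[OF lin_contract subspace_xy_forms] by blast
  then show "r = 0" unfolding x_def by (rule smult_ser_monom_eq_0)
qed

lemma xy_forms_max_x_exponent:
  fixes B :: "(mon \<Rightarrow> 'k::field) set"
  assumes B: "B \<subseteq> xy_forms d" "finite B" and v1: "v1 \<in> B" "v1 \<noteq> 0"
  obtains v0 a where "v0 \<in> B" "a \<le> d" "v0 (a, d - a, 0, 0) \<noteq> 0"
    "\<And>v a'. v \<in> B \<Longrightarrow> a < a' \<Longrightarrow> a' \<le> d \<Longrightarrow> v (a', d - a', 0, 0) = 0"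
proof -
  define E where "E = {a. a \<le> d \<and> (\<exists>v\<in>B. v (a, d - a, 0, 0) \<noteq> 0)}"
  have fE: "finite E" by (simp add: E_def)
  obtain m where m: "v1 m \<noteq> 0" using v1(2) by (auto simp: fun_eq_iff)
  then have "m \<in> xy_monos d" using xy_forms_support v1(1) B(1) by blast
  then obtain a where "m = (a, d - a, 0, 0)" "a \<le> d" by (auto simp: xy_monos_def)
  then have "E \<noteq> {}" using v1 m by (auto simp: E_def)
  then have "Max E \<in> E" using fE by simp
  then obtain v0 where v0: "v0 \<in> B" "v0 (Max E, d - Max E, 0, 0) \<noteq> 0" "Max E \<le> d"
    by (auto simp: E_def)
  have "v (a', d - a', 0, 0) = 0" if "v \<in> B" "Max E < a'" "a' \<le> d" for v a'
  proof (rule ccontr)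
    assume "v (a', d - a', 0, 0) \<noteq> 0"
    then have "a' \<in> E" using that by (auto simp: E_def)
    then show False using Max_ge[OF fE] that(2) by fastforce
  qed
  then show ?thesis using that[OF v0(1,3,2)] by blast
qed

text \<open>If \<open>v\<^sub>0 \<in> B\<close> has the largest \<open>x\<close>-exponent \<open>a\<close> occurring in \<open>B\<close>, then
  \<open>x v\<^sub>0\<close> involves \<open>X\<^sup>[\<^sup>a\<^sup>+\<^sup>1\<^sup>]\<close>, which no element of \<open>y B\<close> does.\<close>

lemma xy_forms_independent_grow:
  fixes B :: "(mon \<Rightarrow> 'k::field) set"
  assumes B: "B \<subseteq> xy_forms d" "vs.independent B" "finite B" "B \<noteq> {}"
  obtains v0 where "v0 \<in> B"
    "vs.independent (insert (smult_ser (monom (1,0,0,0)) v0) (smult_ser (monom (0,1,0,0)) ` B))"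
    "card (insert (smult_ser (monom (1,0,0,0)) v0) (smult_ser (monom (0,1,0,0)) ` B)) = Suc (card B)"
proof -
  let ?x = "smult_ser (monom (1,0,0,0)) :: (mon \<Rightarrow> 'k) \<Rightarrow> _"
    and ?y = "smult_ser (monom (0,1,0,0)) :: (mon \<Rightarrow> 'k) \<Rightarrow> _"
  obtain v1 where v1: "v1 \<in> B" using B(4) by blast
  moreover have "v1 \<noteq> 0" using B(2) v1 vs.dependent_zero by blast
  ultimately obtain v0 a where v0: "v0 \<in> B" "v0 (a, d - a, 0, 0) \<noteq> 0"
    and above: "\<And>v a'. v \<in> B \<Longrightarrow> a < a' \<Longrightarrow> a' \<le> d \<Longrightarrow> v (a', d - a', 0, 0) = 0"
    by (rule xy_forms_max_x_exponent[OF B(1,3)]) blast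
  define pt :: mon where "pt = (Suc a, d - a, 0, 0)"
  have yB: "indep_mod B ?y {0}"
    by (rule lin_indep_mod_if_kernel_0[OF lin_smult_ser_monom B(3,2) smult_ser_monom_eq_0])
  have y_pt: "z pt = 0" if z: "z \<in> ?y ` B" for z
  proof -
    obtain v where v: "v \<in> B" "z = ?y v" using z by blast
    show ?thesis
    proof (cases "mle (0,1,0,0) pt")
      case True
      then have "Suc a \<le> d" by (simp add: pt_def)
      then have "v (Suc a, d - Suc a, 0, 0) = 0" using above[OF v(1)] by simp
      then show ?thesis using True v(2) by (simp add: smult_ser_monom pt_def)
    qed (simp add: v(2) smult_ser_monom)
  qed
  have "w pt = 0" if "w \<in> vs.span (?y ` B)" for w
    using that by (induction rule: vs.span_induct_alt) (simp_all add: y_pt)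
  moreover have "?x v0 pt \<noteq> 0" using v0(2) by (simp add: smult_ser_monom pt_def)
  ultimately have notin: "?x v0 \<notin> vs.span (?y ` B)" by blast
  have "vs.independent (insert (?x v0) (?y ` B))"
    by (rule vs.independent_insertI[OF notin indep_mod_zero_independent[OF B(3) yB]])
  moreover have "card (insert (?x v0) (?y ` B)) = Suc (card B)"
  proof -
    have "?x v0 \<notin> ?y ` B" using notin vs.span_superset[of "?y ` B"] by blast
    then have "card (insert (?x v0) (?y ` B)) = Suc (card (?y ` B))"
      by (rule card_insert_disjoint[OF finite_imageI[OF B(3)]])
    then show ?thesis using indep_mod_zero_card[OF B(3) yB] by simp
  qed
  ultimately show ?thesis by (rule that[OF v0(1)])
qed

section \<open>The apolar pairing\<close>

definition pairing :: "nat \<Rightarrow> (mon \<Rightarrow> 'k::field) \<Rightarrow> (mon \<Rightarrow> 'k) \<Rightarrow> 'k" where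
  "pairing d f X = (\<Sum>b\<in>xy_monos d. f b * X b)"

lemma pairing_eq_contract:
  assumes f: "f \<in> xy_forms d" and X: "dp_poly X"
  shows "pairing d f X = contract f X (0,0,0,0)"
proof -
  define S where "S = {b. X b \<noteq> 0}"
  have fS: "finite S" using X by (simp add: dp_poly_def S_def)
  have "contract f X (0,0,0,0) = (\<Sum>b\<in>S. if mle (0,0,0,0) b then f (msub b (0,0,0,0)) * X b else 0)"
    by (rule contract_eq_sum[OF fS]) (simp add: S_def)
  also have "\<dots> = (\<Sum>b\<in>S. f b * X b)"
    by (simp add: mle_zero)
  also have "\<dots> = (\<Sum>b\<in>S \<union> xy_monos d. f b * X b)"
    by (rule sum.mono_neutral_left) (use fS S_def in auto)
  also have "\<dots> = pairing d f X"
    unfolding pairing_def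
  proof (rule sum.mono_neutral_right)
    show "\<forall>b\<in>S \<union> xy_monos d - xy_monos d. f b * X b = 0"
      using xy_forms_support[OF f] by (metis DiffD2 mult_eq_0_iff)
  qed (use fS in auto)
  finally show ?thesis ..
qed

lemma pairing_lincomb: "pairing d f (\<Sum>i\<in>I. fscale (c i) (v i)) = (\<Sum>i\<in>I. c i * pairing d f (v i))"
  unfolding pairing_def by (simp add: sum_apply sum_distrib_left sum.swap[of _ "xy_monos d"] algebra_simps)

lemma pairing_add_left: "pairing d (f1 + f2) X = pairing d f1 X + pairing d f2 X"
  unfolding pairing_def by (simp add: sum.distrib algebra_simps)

lemma pairing_fscale_left: "pairing d (fscale c f) X = c * pairing d f X"
  unfolding pairing_def by (simp add: sum_distrib_left algebra_simps)

lemma pairing_hcomp: "pairing d f (hcomp d X) = pairing d f X"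
  unfolding pairing_def by (rule sum.cong) (auto simp: mem_xy_monos hcomp_def)

lemma pairing_monom: "m \<in> xy_monos d \<Longrightarrow> pairing d f (monom m) = f m"
  unfolding pairing_def by (simp add: monom_def if_distrib[of "\<lambda>x. _ * x"] sum.delta' cong: if_cong)

lemma xy_form_eq_0_if_pairing_eq_0:
  assumes f: "f \<in> xy_forms d" and S: "finite S" "xy_forms d \<subseteq> vs.span S"
    and perp: "\<And>s. s \<in> S \<Longrightarrow> pairing d f s = 0"
  shows "f = 0"
proof (rule xy_forms_eqI[OF f vs.subspace_0[OF subspace_xy_forms]])
  fix m assume m: "m \<in> xy_monos d"
  then have "monom m \<in> vs.span S" using S(2) monom_xy_forms by blast
  then obtain u where u: "monom m = (\<Sum>s\<in>S. fscale (u s) s)"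
    using vs.span_finite[OF S(1)] by auto
  have "f m = pairing d f (monom m)" by (rule pairing_monom[OF m, symmetric])
  also have "\<dots> = 0" by (simp add: u pairing_lincomb perp)
  finally show "f m = 0 m" by simp
qed

lemma independent_card_ge_by_orthogonal:
  fixes BW :: "(mon \<Rightarrow> 'k::field) set"
  assumes BW: "finite BW" "vs.independent BW"
    and orth: "\<And>K. K \<subseteq> xy_forms d \<Longrightarrow> \<forall>s\<in>K. \<forall>w\<in>BW. pairing d s w = 0 \<Longrightarrow>
      vs.independent K \<Longrightarrow> card K \<le> k"
  shows "Suc d \<le> card BW + k"
proof -
  define L where "L s = (\<Sum>w\<in>BW. fscale (pairing d s w) w)" for s
  have linL: "lin L"
    by (rule linI)
       (simp_all add: L_def pairing_add_left pairing_fscale_left vs.scale_left_distrib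
         sum.distrib vs.scale_sum_right vs.scale_scale)
  have "vs.span (monom ` xy_monos d) \<subseteq> xy_forms d"
    by (rule vs.span_minimal[OF _ subspace_xy_forms]) (auto intro: monom_xy_forms)
  moreover have "\<forall>w\<in>BW. pairing d s w = 0" if "L s = 0" for s
    using vs.independentD[OF BW(2,1) subset_refl, of "\<lambda>w. pairing d s w"] that
    by (simp add: L_def)
  ultimately have ker: "card K \<le> k"
    if "K \<subseteq> vs.span (monom ` xy_monos d)" "\<forall>x\<in>K. L x = 0" "vs.independent K" for K
    using orth[of K] that by blast
  obtain R where R: "finite R" "card (monom ` xy_monos d :: (mon \<Rightarrow> 'k) set) \<le> card R + k"
    "indep_mod R L {0}"
    by (rule rank_nullity_indep_mod[OF linL finite_imageI[OF finite_xy_monos]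
          independent_monom[OF finite_xy_monos] ker]) blast+
  have "L s \<in> vs.span BW" for s
    unfolding L_def by (intro vs.span_sum vs.span_scale) (rule vs.span_base)
  then have "L ` R \<subseteq> vs.span BW" by blast
  then have "card (L ` R) \<le> card BW"
    using vs.independent_span_bound[OF BW(1) indep_mod_zero_independent[OF R(1,3)]] by blast
  then show ?thesis
    using R(2) indep_mod_zero_card[OF R(1,3)] by (simp add: card_monom_xy_monos)
qed

section \<open>A binary form of degree 14 plus a form of degree 13\<close>

locale split_generator =
  fixes g h :: "mon \<Rightarrow> 'k::field"
  assumes g_xy_only: "xy_only g" and g_homog: "homog 14 g" and g_poly: "dp_poly g"
    and g_nonzero: "g \<noteq> 0"
    and h_homog: "homog 13 h" and h_poly: "dp_poly h"
begin

abbreviation G :: "mon \<Rightarrow> 'k" where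
  "G \<equiv> \<lambda>b. g b + h b"

lemma G_poly: "dp_poly G"
  by (rule dp_poly_add[OF g_poly h_poly])

lemma contract_G: "contract f G = contract f g + contract f h"
  by (rule contract_add_right[OF g_poly h_poly])

lemma dp_deg_G: "dp_deg G = 14"
proof -
  obtain b where b: "g b \<noteq> 0" using g_nonzero by (auto simp: fun_eq_iff)
  then have b14: "mdeg b = 14" by (rule homogD[OF g_homog])
  then have "h b = 0" using homog_eq_0[OF h_homog] by simp
  then have bG: "G b \<noteq> 0" using b by simp
  have le: "mdeg x \<le> 14" if "G x \<noteq> 0" for x
    using that homog_eq_0[OF g_homog, of x] homog_eq_0[OF h_homog, of x] by fastforce
  have "Max (mdeg ` {b. G b \<noteq> 0}) = 14"
  proof (rule Max_eqI)
    show "finite (mdeg ` {b. G b \<noteq> 0})" using G_poly by (simp add: dp_poly_def)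
    show "y \<le> 14" if "y \<in> mdeg ` {b. G b \<noteq> 0}" for y using le that by blast
    show "14 \<in> mdeg ` {b. G b \<noteq> 0}" using bG b14 by force
  qed
  then show ?thesis by (simp add: dp_deg_def)
qed

lemma mem_C_pre_G:
  assumes "a \<in> mpow i" "deg_below k (contract a G)" "k \<le> 15 - u - i"
  shows "a \<in> C_pre G u i"
proof (rule mem_C_pre[OF G_poly assms(1)])
  show "deg_below (dp_deg G + 1 - u - i) (contract a G)"
    using assms(2,3) by (auto simp: deg_below_def dp_deg_G)
qed

lemma C_pre_G_E:
  assumes "F \<in> C_pre G u i"
  obtains a m where "a \<in> mpow i" "deg_below (15 - u - i) (contract a G)"
    "m \<in> mpow (Suc i)" "contract F G = contract a G + contract m G"
proof -
  obtain a m where am: "a \<in> mpow i" "deg_below (dp_deg G + 1 - u - i) (contract a G)"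
    "m \<in> mpow (Suc i)" "contract F G = contract a G + contract m G"
    by (rule C_pre_E[OF G_poly assms])
  from am(2) have "deg_below (15 - u - i) (contract a G)" by (simp add: dp_deg_G)
  then show ?thesis by (rule that[OF am(1) _ am(3,4)])
qed

lemma HB_G_representatives:
  assumes "k = 15 - u - i"
  obtains X :: "(mon \<Rightarrow> 'k) set" and a where "finite X" "card X = HB G u i"
    "\<And>x. x \<in> X \<Longrightarrow> a x \<in> mpow i" "\<And>x. x \<in> X \<Longrightarrow> deg_below k (contract (a x) G)"
    "indep_mod X a (C_pre G (Suc u) i)"
proof -
  obtain X :: "(mon \<Rightarrow> 'k) set" and a where X: "finite X" "card X = HB G u i"
    "\<And>x. x \<in> X \<Longrightarrow> a x \<in> mpow i"
    "\<And>x. x \<in> X \<Longrightarrow> deg_below (dp_deg G + 1 - u - i) (contract (a x) G)"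
    "indep_mod X a (C_pre G (Suc u) i)"
    by (rule HB_representatives[OF G_poly]) blast
  have "deg_below k (contract (a x) G)" if "x \<in> X" for x
    using X(4)[OF that] assms by (simp add: dp_deg_G)
  then show ?thesis using that[OF X(1-3) _ X(5)] by blast
qed

lemma hcomp_contract_G:
  assumes "d \<le> 13"
  shows "hcomp d (contract f G) = contract (hcomp (14 - d) f) g + contract (hcomp (13 - d) f) h"
proof
  fix c
  show "hcomp d (contract f G) c = (contract (hcomp (14 - d) f) g + contract (hcomp (13 - d) f) h) c"
  proof (cases "mdeg c = d")
    case True
    then show ?thesis
      using contract_hcomp[OF g_homog, of f c] contract_hcomp[OF h_homog, of f c]
      by (simp add: hcomp_def contract_G)
  next
    case False
    have "homog (14 - (14 - d)) (contract (hcomp (14 - d) f) g)"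
      "homog (13 - (13 - d)) (contract (hcomp (13 - d) f) h)"
      by (rule contract_homog[OF g_homog homog_hcomp] contract_homog[OF h_homog homog_hcomp])+
    then have "homog d (contract (hcomp (14 - d) f) g)" "homog d (contract (hcomp (13 - d) f) h)"
      using assms by simp_all
    then show ?thesis using False by (simp add: hcomp_def homog_iff)
  qed
qed

lemma contract_g_xy_forms: "r \<in> xy_forms d \<Longrightarrow> contract r g \<in> xy_forms (14 - d)"
  unfolding xy_forms_def using contract_homog[OF g_homog] contract_xy_only[OF g_xy_only] by blast

lemma contract_g_xy_part: "contract f g = contract (xy_part f) g"
  by (rule contract_xy_part[OF g_xy_only])

lemma contract_monom_g: "zw_deg e \<noteq> 0 \<Longrightarrow> contract (monom e) g = 0"
  using xy_onlyD[OF g_xy_only] by (simp add: fun_eq_iff contract_monom[OF g_poly])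

lemma homog_monom: "homog (mdeg e) (monom e)"
  by (simp add: homog_def monom_def)

lemma not_in_C_pre_2:
  assumes F: "homog i F" "contract F g = 0" and c: "zw_deg c \<noteq> 0" "contract F h c \<noteq> 0"
    and i: "i \<le> 13"
  shows "F \<notin> C_pre G 2 i"
proof
  assume "F \<in> C_pre G 2 i"
  then obtain a m where a: "deg_below (dp_deg G + 1 - 2 - i) (contract a G)"
    and m: "m \<in> mpow (Suc i)" and F_am: "contract F G = contract a G + contract m G"
    by (rule C_pre_E[OF G_poly])
  have dc: "mdeg c = 13 - i" using homogD[OF contract_homog[OF h_homog F(1)] c(2)] .
  have "contract a G c = 0" using a dc unfolding deg_below_def dp_deg_G by simp
  moreover have "contract m g c = 0" using xy_onlyD[OF contract_xy_only[OF g_xy_only] c(1)] .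
  moreover have "contract m h c = 0"
    using contract_hcomp[OF h_homog, of m c] hcomp_eq_0[OF m, of i] dc i by simp
  moreover have "contract F G c = contract F h c" using F(2) by (simp add: contract_G)
  ultimately show False using fun_cong[OF F_am, of c] c(2) by (simp add: contract_G)
qed

text \<open>A form \<open>f\<close> of degree \<open>i\<close> with \<open>f \<circ> g = 0\<close> lies in \<open>C_B(1)_i\<close>; if
  \<open>f \<circ> h\<close> involved \<open>Z\<close> or \<open>W\<close>, it would survive in \<open>H_B(1)_i\<close>.\<close>

lemma xy_only_contract_h_if_HB_1_eq_0:
  assumes HB: "HB G 1 i = 0" and i: "i \<le> 13" and f: "homog i f" "contract f g = 0"
  shows "xy_only (contract f h)"
proof (rule ccontr)
  assume "\<not> xy_only (contract f h)"
  then obtain c where c: "zw_deg c \<noteq> 0" "contract f h c \<noteq> 0" by (auto simp: xy_only_def)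
  have "f \<in> C_pre G 1 i"
  proof (rule mem_C_pre[OF G_poly homog_imp_mpow[OF f(1) order_refl]])
    have "homog (13 - i) (contract f G)"
      using contract_homog[OF h_homog f(1)] f(2) by (simp add: contract_G)
    then show "deg_below (dp_deg G + 1 - 1 - i) (contract f G)"
      by (rule homog_deg_below) (use i in \<open>simp add: dp_deg_G\<close>)
  qed
  moreover have "indep_mod {f} id (C_pre G (Suc 1) i)"
  proof (rule indep_modI)
    fix a assume "(\<Sum>x\<in>{f}. fscale (a x) (id x)) \<in> C_pre G (Suc 1) i"
    then have "fscale (a f) f \<in> C_pre G 2 i" by (simp add: numeral_2_eq_2)
    moreover have "fscale (a f) f \<notin> C_pre G 2 i" if "a f \<noteq> 0"
      using not_in_C_pre_2[of i "fscale (a f) f" c] f c i that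
      by (simp add: contract_fscale homog_def)
    ultimately show "\<forall>x\<in>{f}. a x = 0" by auto
  qed
  ultimately have "card {f} \<le> HB G 1 i" by (intro HB_ge[OF G_poly]) auto
  then show False using HB by simp
qed

lemma h_zw_deg_le_1:
  assumes HB: "HB G 1 6 = 0" and b: "h b \<noteq> 0"
  shows "zw_deg b \<le> 1"
proof (rule ccontr)
  assume "\<not> zw_deg b \<le> 1"
  moreover have "mdeg b = 13" using homogD[OF h_homog b] .
  ultimately have "2 \<le> zw_deg b" "(1::nat) \<le> 6" "6 < mdeg b" by simp_all
  then obtain e c where ec: "b = madd c e" "mdeg e = 6" "zw_deg e \<noteq> 0" "zw_deg c \<noteq> 0"
    by (rule split_zw_deg)
  have "xy_only (contract (monom e) h)"
    using xy_only_contract_h_if_HB_1_eq_0[OF HB, of "monom e"] homog_monom[of e]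
      contract_monom_g[OF ec(3)] ec(2) by simp
  then have "contract (monom e) h c = 0" using ec(4) by (rule xy_onlyD)
  then show False using b ec(1) by (simp add: contract_monom[OF h_poly])
qed

lemma contract_h_xy_part:
  assumes HB: "HB G 1 6 = 0" and c: "zw_deg c \<noteq> 0"
  shows "contract p h c = contract (xy_part p) h c"
proof -
  have "contract (p - xy_part p) h c = 0"
  proof (rule contract_eq_0I)
    fix b assume b: "h b \<noteq> 0" "mle c b"
    have "zw_deg b \<le> 1" using b(1) by (rule h_zw_deg_le_1[OF HB])
    then have "zw_deg (msub b c) = 0"
      using zw_deg_msub[OF b(2)] zw_deg_mono[OF b(2)] c by simp
    then show "(p - xy_part p) (msub b c) = 0" by (simp add: xy_part_def)
  qed
  then show ?thesis by (simp add: contract_diff)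
qed

lemma contract_g_bij_7:
  assumes HB: "HB G 0 7 = 8"
  shows "bij_betw (\<lambda>r. contract r g) (xy_forms 7) (xy_forms 7)"
proof -
  obtain X :: "(mon \<Rightarrow> 'k) set" and a where X: "finite X" "card X = HB G 0 7"
    "\<And>x. x \<in> X \<Longrightarrow> a x \<in> mpow 7" "\<And>x. x \<in> X \<Longrightarrow> deg_below 8 (contract (a x) G)"
    "indep_mod X a (C_pre G (Suc 0) 7)"
    by (rule HB_G_representatives[where k=8 and u=0 and i=7]) (simp, blast)
  define r where "r x = xy_part (hcomp 7 (a x))" for x
  have hcomp_7: "hcomp 7 (contract (a x) G) = contract (r x) g" if "x \<in> X" for x
    using hcomp_contract_G[of 7 "a x"] hcomp_eq_0[OF X(3)[OF that], of 6]
    by (simp add: r_def contract_g_xy_part[symmetric])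
  have indep: "indep_mod X ((\<lambda>r. contract r g) \<circ> r) {0}"
  proof (rule indep_modI)
    fix c assume "(\<Sum>x\<in>X. fscale (c x) (((\<lambda>r. contract r g) \<circ> r) x)) \<in> {0}"
    then have "hcomp 7 (contract (\<Sum>x\<in>X. fscale (c x) (a x)) G) = 0"
      using hcomp_7 by (simp add: hcomp_contract_lincomb)
    moreover have "deg_below (Suc 7) (contract (\<Sum>x\<in>X. fscale (c x) (a x)) G)"
      using X(4) by (simp add: contract_lincomb deg_below_lincomb)
    ultimately have "deg_below 7 (contract (\<Sum>x\<in>X. fscale (c x) (a x)) G)"
      by (rule deg_below_SucI)
    moreover have "(\<Sum>x\<in>X. fscale (c x) (a x)) \<in> mpow 7" by (rule mpow_lincomb[OF X(3)])
    ultimately have "(\<Sum>x\<in>X. fscale (c x) (a x)) \<in> C_pre G (Suc 0) 7"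
      using mem_C_pre_G[of "\<Sum>x\<in>X. fscale (c x) (a x)" 7 7 "Suc 0"] by linarith
    then show "\<forall>x\<in>X. c x = 0" using indep_modD[OF X(5)] by blast
  qed
  have "(\<lambda>r. contract r g) ` xy_forms 7 \<subseteq> xy_forms 7"
    using contract_g_xy_forms[of _ 7] by auto
  moreover have "card X = Suc 7" using X(2) HB by simp
  moreover have "r ` X \<subseteq> xy_forms 7" by (auto simp: r_def xy_part_hcomp)
  ultimately show ?thesis by (rule lin_bij_betw_xy_forms[OF lin_contract _ X(1) _ _ indep])
qed

end

section \<open>Consequences of the Hilbert function hypotheses\<close>

locale split_generator_hilbert = split_generator +
  assumes HB_0_4: "HB (\<lambda>b. g b + h b) 0 4 = 5"
    and HB_0_7: "HB (\<lambda>b. g b + h b) 0 7 = 8"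
    and HB_1_3: "HB (\<lambda>b. g b + h b) 1 3 = 6"
    and HB_1_6: "HB (\<lambda>b. g b + h b) 1 6 = 0"
    and HB_1_7: "HB (\<lambda>b. g b + h b) 1 7 = 0"
begin

definition hD_forms where
  "hD_forms d = {f \<in> xy_forms d. xy_only (contract f h)}"

definition ann_g_forms where
  "ann_g_forms d = {f. homog d f \<and> contract f g = 0}"

lemma contract_g_inj_3: "inj_on (\<lambda>r. contract r g) (xy_forms 3)"
  by (rule contract_inj_on_xy_forms_mono[OF g_poly bij_betw_imp_inj_on[OF contract_g_bij_7[OF HB_0_7]]])
     simp

lemma xy_part_hcomp_3_eq_0:
  assumes a: "a \<in> mpow 3" "deg_below 11 (contract a G)"
  shows "xy_part (hcomp 3 a) = 0"
proof -
  have "hcomp 11 (contract a G) = contract (hcomp 3 a) g"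
    using hcomp_contract_G[of 11 a] hcomp_eq_0[OF a(1), of 2] by simp
  moreover have "hcomp 11 (contract a G) = 0"
    by (rule hcomp_eq_0_if_deg_below[OF a(2) order_refl])
  ultimately have "contract (xy_part (hcomp 3 a)) g = 0"
    by (simp add: contract_g_xy_part[symmetric])
  moreover have "\<forall>x\<in>xy_forms 3. contract x g = 0 \<longrightarrow> x = 0"
    using contract_g_inj_3 vsp.linear_inj_on_iff_eq_0[OF lin_contract[of g] subspace_xy_forms[of 3]]
    by simp
  ultimately show ?thesis using xy_part_hcomp by blast
qed

lemma hcomp_10_contract_G_mpow_4: "a \<in> mpow 4 \<Longrightarrow> hcomp 10 (contract a G) = contract (hcomp 4 a) g"
  using hcomp_contract_G[of 10 a] hcomp_eq_0[of a 4 3] by simp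

lemma hcomp_10_contract_G_xy_forms:
  assumes "xy_part (hcomp 3 a) = 0"
  shows "hcomp 10 (contract a G) \<in> xy_forms 10"
  unfolding xy_forms_def
proof (intro CollectI conjI)
  show "homog 10 (hcomp 10 (contract a G))" by simp
  show "xy_only (hcomp 10 (contract a G))"
    unfolding xy_only_def
  proof (intro allI impI)
    fix c assume c: "zw_deg c \<noteq> 0"
    have "contract (hcomp 4 a) g c = 0" using xy_onlyD[OF contract_xy_only[OF g_xy_only] c] .
    moreover have "contract (hcomp 3 a) h c = 0"
      using contract_h_xy_part[OF HB_1_6 c, of "hcomp 3 a"] assms by simp
    ultimately show "hcomp 10 (contract a G) c = 0" using hcomp_contract_G[of 10 a] by simp
  qed
qed

lemma hcomp_4_contract_G:
  shows "deg_below 11 (contract (hcomp 4 a) G)"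
    and "a \<in> mpow 4 \<Longrightarrow> hcomp 10 (contract (hcomp 4 a) G) = hcomp 10 (contract a G)"
proof -
  have "homog 10 (contract (hcomp 4 a) g)" "homog 9 (contract (hcomp 4 a) h)"
    using contract_homog[OF g_homog, of 4] contract_homog[OF h_homog, of 4] by simp_all
  then show "deg_below 11 (contract (hcomp 4 a) G)"
    by (simp add: contract_G deg_below_add homog_deg_below)
  show "hcomp 10 (contract (hcomp 4 a) G) = hcomp 10 (contract a G)" if "a \<in> mpow 4"
    using hcomp_10_contract_G_mpow_4[OF homog_imp_mpow[OF homog_hcomp order_refl, of 4 a]]
      hcomp_10_contract_G_mpow_4[OF that]
    by (simp add: homog_hcomp_eq)
qed

text \<open>Absorbing the degree-4 parts of the second family into \<open>\<mm>\<^sup>4\<close> turns a relation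
  among the degree-10 components into an element of \<open>C_B(2)_3\<close> spanned by the first family.\<close>

lemma degree_10_relation_first_family:
  assumes X1: "\<And>x. x \<in> X1 \<Longrightarrow> a1 x \<in> mpow 3"
      "\<And>x. x \<in> X1 \<Longrightarrow> deg_below 11 (contract (a1 x) G)" "indep_mod X1 a1 (C_pre G 2 3)"
    and X0: "\<And>y. y \<in> X0 \<Longrightarrow> a0 y \<in> mpow 4"
    and rel: "(\<Sum>x\<in>X1. fscale (c1 x) (hcomp 10 (contract (a1 x) G)))
      + (\<Sum>y\<in>X0. fscale (c0 y) (hcomp 10 (contract (a0 y) G))) = 0"
  shows "\<forall>x\<in>X1. c1 x = 0"
proof -
  let ?A = "\<Sum>x\<in>X1. fscale (c1 x) (a1 x)" and ?B = "\<Sum>y\<in>X0. fscale (c0 y) (hcomp 4 (a0 y))"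
  have B_mpow: "?B \<in> mpow 4"
    by (rule mpow_lincomb[OF homog_imp_mpow[OF homog_hcomp order_refl]])
  have "?A + ?B \<in> C_pre G 2 3"
  proof (rule mem_C_pre_G)
    show "?A + ?B \<in> mpow 3"
      using mpow_lincomb[OF X1(1)] B_mpow mpow_antimono[of 3 4]
      by (intro vs.subspace_add[OF subspace_mpow]) auto
    have "hcomp 10 (contract (?A + ?B) G) = 0"
      using rel hcomp_4_contract_G(2)[OF X0]
      by (simp add: contract_add vsp.linear_add[OF lin_hcomp] hcomp_contract_lincomb cong: sum.cong)
    moreover have "deg_below (Suc 10) (contract (?A + ?B) G)"
      using X1(2) hcomp_4_contract_G(1)
      by (simp add: contract_add contract_lincomb deg_below_add deg_below_lincomb)
    ultimately show "deg_below 10 (contract (?A + ?B) G)" by (rule deg_below_SucI)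
  qed simp
  moreover have "?B \<in> C_pre G 2 3"
    using B_mpow mpow_subset_C_pre[OF G_poly, of 3 2] by auto
  ultimately have "(?A + ?B) - ?B \<in> C_pre G 2 3"
    by (rule vs.subspace_diff[OF subspace_C_pre[OF G_poly]])
  then show ?thesis using indep_modD[OF X1(3)] by simp
qed

lemma degree_10_components_independent:
  fixes X1 :: "'i set" and X0 :: "'j set"
  assumes X1: "finite X1" "\<And>x. x \<in> X1 \<Longrightarrow> a1 x \<in> mpow 3"
      "\<And>x. x \<in> X1 \<Longrightarrow> deg_below 11 (contract (a1 x) G)" "indep_mod X1 a1 (C_pre G 2 3)"
    and X0: "finite X0" "\<And>y. y \<in> X0 \<Longrightarrow> a0 y \<in> mpow 4"
      "\<And>y. y \<in> X0 \<Longrightarrow> deg_below 11 (contract (a0 y) G)" "indep_mod X0 a0 (C_pre G 1 4)"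
  shows "indep_mod (X1 <+> X0)
    (case_sum (\<lambda>x. hcomp 10 (contract (a1 x) G)) (\<lambda>y. hcomp 10 (contract (a0 y) G))) {0}"
proof (rule indep_modI)
  fix c
  assume "(\<Sum>i\<in>X1 <+> X0. fscale (c i)
    (case_sum (\<lambda>x. hcomp 10 (contract (a1 x) G)) (\<lambda>y. hcomp 10 (contract (a0 y) G)) i)) \<in> {0}"
  then have rel: "(\<Sum>x\<in>X1. fscale (c (Inl x)) (hcomp 10 (contract (a1 x) G)))
      + (\<Sum>y\<in>X0. fscale (c (Inr y)) (hcomp 10 (contract (a0 y) G))) = 0"
    by (simp add: sum.Plus[OF X1(1) X0(1)] comp_def)
  have c1: "\<forall>x\<in>X1. c (Inl x) = 0"
    by (rule degree_10_relation_first_family[OF X1(2-4) X0(2) rel])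
  let ?B = "\<Sum>y\<in>X0. fscale (c (Inr y)) (a0 y)"
  have "hcomp 10 (contract ?B G) = 0"
    using rel c1 by (simp add: hcomp_contract_lincomb)
  moreover have "deg_below (Suc 10) (contract ?B G)"
    using X0(3) by (simp add: contract_lincomb deg_below_lincomb)
  ultimately have low: "deg_below 10 (contract ?B G)" by (rule deg_below_SucI)
  have "?B \<in> C_pre G 1 4"
  proof (rule mem_C_pre_G)
    show "?B \<in> mpow 4" by (rule mpow_lincomb[OF X0(2)])
  qed (fact low, simp)
  then have c0: "\<forall>y\<in>X0. c (Inr y) = 0" using indep_modD[OF X0(4), of "\<lambda>y. c (Inr y)"] by blast
  show "\<forall>i\<in>X1 <+> X0. c i = 0" using c1 c0 by blast
qed

lemma xy_forms_10_spanned: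
  obtains S where "finite S" "xy_forms 10 \<subseteq> vs.span S"
    "\<And>s. s \<in> S \<Longrightarrow> \<exists>a. xy_part (hcomp 3 a) = 0 \<and> s = hcomp 10 (contract a G)"
proof -
  obtain X1 :: "(mon \<Rightarrow> 'a) set" and a1 where X1: "finite X1" "card X1 = HB G 1 3"
    "\<And>x. x \<in> X1 \<Longrightarrow> a1 x \<in> mpow 3" "\<And>x. x \<in> X1 \<Longrightarrow> deg_below 11 (contract (a1 x) G)"
    "indep_mod X1 a1 (C_pre G (Suc 1) 3)"
    by (rule HB_G_representatives[where k=11 and u=1 and i=3]) (simp, blast)
  obtain X0 :: "(mon \<Rightarrow> 'a) set" and a0 where X0: "finite X0" "card X0 = HB G 0 4"
    "\<And>y. y \<in> X0 \<Longrightarrow> a0 y \<in> mpow 4" "\<And>y. y \<in> X0 \<Longrightarrow> deg_below 11 (contract (a0 y) G)"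
    "indep_mod X0 a0 (C_pre G (Suc 0) 4)"
    by (rule HB_G_representatives[where k=11 and u=0 and i=4]) (simp, blast)
  define v where "v = case_sum (\<lambda>x. hcomp 10 (contract (a1 x) G)) (\<lambda>y. hcomp 10 (contract (a0 y) G))"
  have v_ex: "\<exists>a. xy_part (hcomp 3 a) = 0 \<and> v i = hcomp 10 (contract a G)" if "i \<in> X1 <+> X0" for i
  proof (cases i)
    case (Inl x)
    then have "x \<in> X1" using that by blast
    then show ?thesis
      using xy_part_hcomp_3_eq_0[OF X1(3,4)] Inl by (auto simp: v_def)
  next
    case (Inr y)
    then have "y \<in> X0" using that by blast
    then have "hcomp 3 (a0 y) = 0" by (rule hcomp_eq_0[OF X0(3)]) simp
    then show ?thesis using Inr by (auto simp: v_def xy_part_def fun_eq_iff)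
  qed
  have vX: "v ` (X1 <+> X0) \<subseteq> xy_forms 10"
  proof
    fix s assume "s \<in> v ` (X1 <+> X0)"
    then obtain i where "i \<in> X1 <+> X0" "s = v i" by blast
    then obtain a where "xy_part (hcomp 3 a) = 0" "s = hcomp 10 (contract a G)"
      using v_ex by blast
    then show "s \<in> xy_forms 10" using hcomp_10_contract_G_xy_forms by simp
  qed
  have "indep_mod (X1 <+> X0) v {0}"
    unfolding v_def
    by (rule degree_10_components_independent[OF X1(1,3,4) _ X0(1,3,4)])
       (use X1(5) X0(5) in \<open>simp_all add: numeral_2_eq_2\<close>)
  moreover have "card (X1 <+> X0) = Suc 10"
    using X1(1,2) X0(1,2) HB_1_3 HB_0_4 by (simp add: card_Plus)
  ultimately have span: "xy_forms 10 \<subseteq> vs.span (v ` (X1 <+> X0))"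
    using xy_forms_indep_mod_spanned[OF _ _ vX] X1(1) X0(1) by simp
  have v_ex': "\<exists>a. xy_part (hcomp 3 a) = 0 \<and> s = hcomp 10 (contract a G)"
    if "s \<in> v ` (X1 <+> X0)" for s
    using that v_ex by blast
  show ?thesis
    by (rule that[OF _ span v_ex']) (simp add: X1(1) X0(1))
qed

lemma pairing_hcomp_10_eq_0:
  assumes f: "f \<in> hD_forms 10" "contract f g = 0" and a: "xy_part (hcomp 3 a) = 0"
  shows "pairing 10 f (hcomp 10 (contract a G)) = 0"
proof -
  have f10: "f \<in> xy_forms 10" using f(1) by (simp add: hD_forms_def)
  have fh: "contract f h \<in> xy_forms 3"
    using f(1) contract_homog[OF h_homog, of 10 f] by (simp add: hD_forms_def xy_forms_def)
  have "pairing 10 f (hcomp 10 (contract a G)) = contract f (contract a G) (0,0,0,0)"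
    by (simp add: pairing_hcomp pairing_eq_contract[OF f10 dp_poly_contract[OF G_poly]])
  also have "\<dots> = contract a (contract f h) (0,0,0,0)"
    by (simp only: contract_commute[OF G_poly]) (simp add: contract_G f(2))
  also have "\<dots> = 0"
  proof (rule contract_eq_0I)
    fix b assume "contract f h b \<noteq> 0"
    then have "mdeg b = 3" "zw_deg b = 0"
      using xy_forms_support[OF fh] by (simp_all add: mem_xy_monos)
    then show "a (msub b (0,0,0,0)) = 0"
      using fun_cong[OF a, of b] by (simp add: xy_part_def hcomp_def)
  qed
  finally show ?thesis .
qed

lemma hD_form_10_eq_0_if_contract_g_eq_0:
  assumes "f \<in> hD_forms 10" "contract f g = 0"
  shows "f = 0"
proof -
  obtain S where S: "finite S" "xy_forms 10 \<subseteq> vs.span S"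
    "\<And>s. s \<in> S \<Longrightarrow> \<exists>a. xy_part (hcomp 3 a) = 0 \<and> s = hcomp 10 (contract a G)"
    by (rule xy_forms_10_spanned) blast
  have "f \<in> xy_forms 10" using assms(1) by (simp add: hD_forms_def)
  then show ?thesis
    by (rule xy_form_eq_0_if_pairing_eq_0[OF _ S(1,2)])
       (use S(3) pairing_hcomp_10_eq_0[OF assms] in blast)
qed

lemma subspace_hD_forms: "vs.subspace (hD_forms d)"
  unfolding vs.subspace_def hD_forms_def xy_only_iff_zw_part
proof (intro conjI ballI allI)
  show "0 \<in> {f \<in> xy_forms d. zw_part (contract f h) = 0}"
    by (simp add: vs.subspace_0[OF subspace_xy_forms] vsp.linear_0[OF lin_zw_part])
next
  fix x y assume "x \<in> {f \<in> xy_forms d. zw_part (contract f h) = 0}"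
    "y \<in> {f \<in> xy_forms d. zw_part (contract f h) = 0}"
  then show "x + y \<in> {f \<in> xy_forms d. zw_part (contract f h) = 0}"
    by (simp add: vs.subspace_add[OF subspace_xy_forms] contract_add vsp.linear_add[OF lin_zw_part])
next
  fix c x assume "x \<in> {f \<in> xy_forms d. zw_part (contract f h) = 0}"
  then show "fscale c x \<in> {f \<in> xy_forms d. zw_part (contract f h) = 0}"
    by (simp add: vs.subspace_scale[OF subspace_xy_forms] contract_fscale
        vsp.linear_scale[OF lin_zw_part])
qed

lemma smult_ser_monom_hD_forms:
  assumes f: "f \<in> hD_forms d" and e: "zw_deg e = 0"
  shows "smult_ser (monom e) f \<in> hD_forms (d + mdeg e)"
  unfolding hD_forms_def
proof (intro CollectI conjI)
  show "smult_ser (monom e) f \<in> xy_forms (d + mdeg e)"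
    by (rule smult_ser_monom_xy_forms) (use f e in \<open>simp_all add: hD_forms_def\<close>)
  show "xy_only (contract (smult_ser (monom e) f) h)"
    unfolding xy_only_def
  proof (intro allI impI)
    fix c assume "zw_deg c \<noteq> 0"
    then have "zw_deg (madd c e) \<noteq> 0" by simp
    then show "contract (smult_ser (monom e) f) h c = 0"
      using f xy_onlyD[of "contract f h" "madd c e"]
      by (simp add: contract_smult_ser_monom[OF h_poly] hD_forms_def)
  qed
qed

lemma hD_forms_independent_grow:
  assumes B: "B \<subseteq> hD_forms d" "vs.independent B" "finite B" "B \<noteq> {}"
  obtains B' where "B' \<subseteq> hD_forms (Suc d)" "vs.independent B'" "finite B'" "card B' = Suc (card B)"
proof -
  have "B \<subseteq> xy_forms d" using B(1) by (auto simp: hD_forms_def)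
  then obtain v0 where v0: "v0 \<in> B"
    "vs.independent (insert (smult_ser (monom (1,0,0,0)) v0) (smult_ser (monom (0,1,0,0)) ` B))"
    "card (insert (smult_ser (monom (1,0,0,0)) v0) (smult_ser (monom (0,1,0,0)) ` B)) = Suc (card B)"
    using xy_forms_independent_grow[OF _ B(2-4)] by blast
  have "insert (smult_ser (monom (1,0,0,0)) v0) (smult_ser (monom (0,1,0,0)) ` B) \<subseteq> hD_forms (Suc d)"
    using smult_ser_monom_hD_forms[of _ d "(1,0,0,0)"] smult_ser_monom_hD_forms[of _ d "(0,1,0,0)"]
      B(1) v0(1) by auto
  then show ?thesis
    by (rule that[OF _ v0(2) _ v0(3)]) (simp add: B(3))
qed

lemma hD_forms_7_card_le_2:
  assumes B: "B \<subseteq> hD_forms 7" "vs.independent B"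
  shows "finite B \<and> card B \<le> 2"
proof -
  have fB: "finite B"
    using xy_forms_independent_card_le[OF B(2)] B(1) by (auto simp: hD_forms_def)
  moreover have "card B \<le> 2"
  proof (rule ccontr)
    assume "\<not> card B \<le> 2"
    then have "3 \<le> card B" by simp
    then obtain B3 where B3: "B3 \<subseteq> B" "card B3 = 3" "finite B3"
      by (rule obtain_subset_with_card_n)
    have i3: "vs.independent B3" using vs.independent_mono[OF B(2) B3(1)] .
    have B3': "B3 \<subseteq> hD_forms 7" "B3 \<noteq> {}" using B3 B(1) by auto
    obtain B4 where B4: "B4 \<subseteq> hD_forms (Suc 7)" "vs.independent B4" "finite B4"
      "card B4 = Suc (card B3)"
      by (rule hD_forms_independent_grow[OF B3'(1) i3 B3(3) B3'(2)]) blast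
    have "B4 \<noteq> {}" using B4(4) by auto
    then obtain B5 where B5: "B5 \<subseteq> hD_forms (Suc (Suc 7))" "vs.independent B5" "finite B5"
      "card B5 = Suc (card B4)"
      by (rule hD_forms_independent_grow[OF B4(1-3)]) blast
    have "B5 \<noteq> {}" using B5(4) by auto
    then obtain B6 where "B6 \<subseteq> hD_forms (Suc (Suc (Suc 7)))" "vs.independent B6" "finite B6"
      "card B6 = Suc (card B5)"
      by (rule hD_forms_independent_grow[OF B5(1-3)]) blast
    then have B6: "B6 \<subseteq> hD_forms 10" "vs.independent B6" "finite B6" "card B6 = 6"
      using B3(2) B4(4) B5(4) by simp_all
    have "indep_mod B6 (\<lambda>x. contract x g) {0}"
    proof (rule lin_indep_mod_if_kernel_0[OF lin_contract B6(3,2)])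
      fix x assume "x \<in> vs.span B6" "contract x g = 0"
      moreover have "vs.span B6 \<subseteq> hD_forms 10"
        by (rule vs.span_minimal[OF B6(1) subspace_hD_forms])
      ultimately show "x = 0" using hD_form_10_eq_0_if_contract_g_eq_0 by blast
    qed
    then have "vs.independent ((\<lambda>x. contract x g) ` B6)" "card ((\<lambda>x. contract x g) ` B6) = 6"
      using indep_mod_zero_independent[OF B6(3)] indep_mod_zero_card[OF B6(3)] B6(4) by auto
    moreover have "(\<lambda>x. contract x g) ` B6 \<subseteq> xy_forms 4"
      using B6(1) contract_g_xy_forms[of _ 10] by (auto simp: hD_forms_def)
    ultimately show False using xy_forms_independent_card_le[of _ 4] by fastforce
  qed
  ultimately show ?thesis ..
qed

lemma subspace_ann_g_forms: "vs.subspace (ann_g_forms d)"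
  unfolding vs.subspace_def ann_g_forms_def homog_iff
  by (simp add: contract_add contract_fscale)

lemma contract_h_ann_g_forms_6: "f \<in> ann_g_forms 6 \<Longrightarrow> contract f h \<in> xy_forms 7"
  unfolding xy_forms_def ann_g_forms_def
  using contract_homog[OF h_homog, of 6 f] xy_only_contract_h_if_HB_1_eq_0[OF HB_1_6, of f]
  by simp

lemma hD_forms_if_pairing_eq_0:
  assumes s: "s \<in> xy_forms 7"
    and perp: "\<And>f. f \<in> ann_g_forms 6 \<Longrightarrow> pairing 7 s (contract f h) = 0"
  shows "s \<in> hD_forms 7"
  unfolding hD_forms_def xy_only_def
proof (intro CollectI conjI allI impI s)
  fix c assume c: "zw_deg c \<noteq> 0"
  show "contract s h c = 0"
  proof (cases "mdeg c = 6")
    case True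
    then have "monom c \<in> ann_g_forms 6"
      using homog_monom[of c] contract_monom_g[OF c] by (simp add: ann_g_forms_def)
    then have "0 = pairing 7 s (contract (monom c) h)" using perp by simp
    also have "\<dots> = contract (monom c) (contract s h) (0,0,0,0)"
      by (simp add: pairing_eq_contract[OF s dp_poly_contract[OF h_poly]] contract_commute[OF h_poly])
    also have "\<dots> = contract s h c"
      by (simp add: contract_monom[OF dp_poly_contract[OF h_poly]])
    finally show ?thesis by simp
  next
    case False
    have "homog 6 (contract s h)"
      using contract_homog[OF h_homog, of 7 s] s by (simp add: xy_forms_def)
    then show ?thesis using False by (rule homog_eq_0)
  qed
qed

text \<open>The space \<open>W\<close> of contractions of \<open>h\<close> by sextics annihilating \<open>g\<close> has
  dimension at least 6: its annihilator in \<open>R\<^sub>7\<close> (under the apolar pairing) consists of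
  forms in \<^const>\<open>hD_forms\<close>, hence has dimension at most 2.\<close>

lemma contract_h_ann_g_forms_6_independent:
  obtains BW where "BW \<subseteq> (\<lambda>f. contract f h) ` ann_g_forms 6" "vs.independent BW" "finite BW"
    "6 \<le> card BW"
proof -
  let ?W = "(\<lambda>f. contract f h) ` ann_g_forms 6"
  obtain BW where BW: "BW \<subseteq> ?W" "vs.independent BW" "?W \<subseteq> vs.span BW"
    by (rule vs.maximal_independent_subset)
  have "?W \<subseteq> xy_forms 7" using contract_h_ann_g_forms_6 by blast
  then have fBW: "finite BW" using xy_forms_independent_card_le[OF BW(2)] BW(1) by blast
  have "card K \<le> 2"
    if K: "K \<subseteq> xy_forms 7" "\<forall>s\<in>K. \<forall>w\<in>BW. pairing 7 s w = 0" "vs.independent K" for K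
  proof -
    have "pairing 7 s (contract f h) = 0" if s: "s \<in> K" and f: "f \<in> ann_g_forms 6" for s f
    proof -
      obtain u where "contract f h = (\<Sum>w\<in>BW. fscale (u w) w)"
        using BW(3) f vs.span_finite[OF fBW] by blast
      then show ?thesis using K(2) s by (simp add: pairing_lincomb)
    qed
    then have "K \<subseteq> hD_forms 7" using K(1) hD_forms_if_pairing_eq_0 by blast
    then show ?thesis using hD_forms_7_card_le_2 K(3) by blast
  qed
  then have "Suc 7 \<le> card BW + 2" by (rule independent_card_ge_by_orthogonal[OF fBW BW(2)])
  then show ?thesis using that[OF BW(1,2) fBW] by simp
qed

definition lifts where
  "lifts = {r \<in> xy_forms 7. \<exists>f\<in>ann_g_forms 6. contract f h + contract r g = 0}"

lemma subspace_lifts: "vs.subspace lifts"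
  unfolding vs.subspace_def
proof (intro conjI ballI allI)
  show "0 \<in> lifts"
    using vs.subspace_0[OF subspace_ann_g_forms] vs.subspace_0[OF subspace_xy_forms]
    by (force simp: lifts_def)
next
  fix r1 r2 assume "r1 \<in> lifts" "r2 \<in> lifts"
  then obtain f1 f2 where "r1 \<in> xy_forms 7" "f1 \<in> ann_g_forms 6" "contract f1 h + contract r1 g = 0"
    "r2 \<in> xy_forms 7" "f2 \<in> ann_g_forms 6" "contract f2 h + contract r2 g = 0"
    unfolding lifts_def by blast
  then show "r1 + r2 \<in> lifts"
    unfolding lifts_def
    by (intro CollectI conjI bexI[of _ "f1 + f2"])
       (simp_all add: vs.subspace_add[OF subspace_xy_forms] vs.subspace_add[OF subspace_ann_g_forms]
         contract_add add_ac)
next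
  fix c r assume "r \<in> lifts"
  then obtain f where "r \<in> xy_forms 7" "f \<in> ann_g_forms 6" "contract f h + contract r g = 0"
    unfolding lifts_def by blast
  then show "fscale c r \<in> lifts"
    unfolding lifts_def
    by (intro CollectI conjI bexI[of _ "fscale c f"])
       (simp_all add: vs.subspace_scale[OF subspace_xy_forms] vs.subspace_scale[OF subspace_ann_g_forms]
         contract_fscale vs.scale_right_distrib[symmetric])
qed

lemma lifts_independent:
  obtains B where "B \<subseteq> lifts" "vs.independent B" "finite B" "6 \<le> card B"
proof -
  obtain BW where BW: "BW \<subseteq> (\<lambda>f. contract f h) ` ann_g_forms 6" "vs.independent BW" "finite BW"
    "6 \<le> card BW"
    by (rule contract_h_ann_g_forms_6_independent)
  have surj: "(\<lambda>r. contract r g) ` xy_forms 7 = xy_forms 7"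
    using contract_g_bij_7[OF HB_0_7] by (simp add: bij_betw_def)
  have "\<forall>w\<in>BW. \<exists>r. r \<in> xy_forms 7 \<and> contract r g = - w"
  proof
    fix w assume "w \<in> BW"
    then have "- w \<in> xy_forms 7"
      using BW(1) contract_h_ann_g_forms_6 vs.subspace_neg[OF subspace_xy_forms] by blast
    then show "\<exists>r. r \<in> xy_forms 7 \<and> contract r g = - w" using surj by (metis imageE)
  qed
  then obtain rr where rr: "\<And>w. w \<in> BW \<Longrightarrow> rr w \<in> xy_forms 7 \<and> contract (rr w) g = - w"
    by metis
  have "rr w \<in> lifts" if w: "w \<in> BW" for w
  proof -
    obtain f where "f \<in> ann_g_forms 6" "w = contract f h" using BW(1) w by blast
    then show ?thesis using rr[OF w] by (auto simp: lifts_def)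
  qed
  moreover have "indep_mod BW rr {0}"
  proof (rule indep_modI)
    fix c assume "(\<Sum>w\<in>BW. fscale (c w) (rr w)) \<in> {0}"
    then have "contract (\<Sum>w\<in>BW. fscale (c w) (rr w)) g = 0" by simp
    then have "(\<Sum>w\<in>BW. fscale (- c w) (id w)) \<in> {0}"
      using rr by (simp add: contract_lincomb vs.scale_minus_left vs.scale_minus_right cong: sum.cong)
    moreover have "indep_mod BW id {0}" using indep_mod_zeroI[OF BW(3), of id] BW(2) by simp
    ultimately show "\<forall>w\<in>BW. c w = 0" using indep_modD[of BW id "{0}" "\<lambda>w. - c w"] by simp
  qed
  ultimately have "rr ` BW \<subseteq> lifts" "vs.independent (rr ` BW)" "card (rr ` BW) = card BW"
    using indep_mod_zero_independent[OF BW(3)] indep_mod_zero_card[OF BW(3)] by auto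
  then show ?thesis
    by (intro that[of "rr ` BW"]) (use BW(3,4) in simp_all)
qed

text \<open>The kernel of \<open>r \<mapsto> zw_part (r \<circ> h)\<close> on \<^const>\<open>lifts\<close> lies in
  \<^const>\<open>hD_forms\<close>, so it cuts the 6 independent lifts down by at most 2.\<close>

lemma lifts_zw_part_independent:
  obtains R where "R \<subseteq> lifts" "finite R" "4 \<le> card R"
    "indep_mod R (\<lambda>r. zw_part (contract r h)) {0}"
proof -
  obtain B where B: "B \<subseteq> lifts" "vs.independent B" "finite B" "6 \<le> card B"
    by (rule lifts_independent)
  have linL: "lin (\<lambda>r. zw_part (contract r h))"
    by (rule linI)
       (simp_all add: contract_add contract_fscale vsp.linear_add[OF lin_zw_part]
         vsp.linear_scale[OF lin_zw_part])
  have span_B: "vs.span B \<subseteq> lifts" by (rule vs.span_minimal[OF B(1) subspace_lifts])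
  have ker: "card K \<le> 2"
    if "K \<subseteq> vs.span B" "\<forall>x\<in>K. zw_part (contract x h) = 0" "vs.independent K" for K
  proof -
    have "K \<subseteq> hD_forms 7"
      using that(1,2) span_B by (auto simp: hD_forms_def lifts_def xy_only_iff_zw_part)
    then show ?thesis using hD_forms_7_card_le_2 that(3) by blast
  qed
  obtain R where R: "finite R" "R \<subseteq> vs.span B" "card B \<le> card R + 2"
    "indep_mod R (\<lambda>r. zw_part (contract r h)) {0}"
    by (rule rank_nullity_indep_mod[OF linL B(3,2) ker]) blast+
  show ?thesis
    by (rule that[OF _ R(1) _ R(4)]) (use R(2,3) B(4) span_B in auto)
qed

lemma lift_contract_G:
  assumes "f \<in> ann_g_forms 6" "contract f h + contract r g = 0"
  shows "contract (f + r) G = contract r h"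
proof -
  have "contract (f + r) G = contract f g + (contract f h + contract r g) + contract r h"
    by (simp add: contract_add contract_G add_ac)
  then show ?thesis using assms by (simp add: ann_g_forms_def)
qed

lemma lift_in_C_pre_2_6:
  assumes r: "r \<in> xy_forms 7" and f: "f \<in> ann_g_forms 6" "contract f h + contract r g = 0"
  shows "f + r \<in> C_pre G 2 6"
proof (rule mem_C_pre_G)
  show "f + r \<in> mpow 6"
    using r f(1) by (intro vs.subspace_add[OF subspace_mpow] homog_imp_mpow)
      (auto simp: xy_forms_def ann_g_forms_def)
  have "homog 6 (contract r h)"
    using contract_homog[OF h_homog, of 7 r] r by (simp add: xy_forms_def)
  then show "deg_below 7 (contract (f + r) G)"
    by (simp add: lift_contract_G[OF f] homog_deg_below)
qed simp

text \<open>Conversely, membership in \<open>C_B(3)_6\<close> forces the contraction with \<open>h\<close> to be free of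
  \<open>Z, W\<close>: its degree-7 part shows that some \<open>m \<in> \<mm>\<^sup>7\<close> has \<open>m\<^sub>7 \<circ> g = 0\<close>, so
  \<open>H_B(1)_7 = 0\<close> applies to \<open>m\<^sub>7\<close>.\<close>

lemma xy_only_contract_h_if_C_pre_3_6:
  assumes r: "r \<in> xy_forms 7" and F: "F \<in> C_pre G 3 6" "contract F G = contract r h"
  shows "xy_only (contract r h)"
proof -
  obtain a m where a: "deg_below (15 - 3 - 6) (contract a G)" and m: "m \<in> mpow (Suc 6)"
    and Fam: "contract F G = contract a G + contract m G"
    by (rule C_pre_G_E[OF F(1)]) blast
  have a6: "deg_below 6 (contract a G)" using a by simp
  have m7: "m \<in> mpow 7" using m by simp
  have am: "contract r h = contract a G + contract m G" using Fam F(2) by simp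
  have rh: "homog 6 (contract r h)"
    using contract_homog[OF h_homog, of 7 r] r by (simp add: xy_forms_def)
  have "hcomp 7 (contract m G) = contract (hcomp 7 m) g"
    using hcomp_contract_G[of 7 m] hcomp_eq_0[OF m7, of 6] by simp
  moreover have "hcomp 7 (contract m G) = 0"
  proof -
    have "contract m G = contract r h - contract a G" using am by simp
    then show ?thesis
      using homog_hcomp_other[OF rh, of 7] hcomp_eq_0_if_deg_below[OF a6, of 7]
      by (simp add: vsp.linear_diff[OF lin_hcomp])
  qed
  ultimately have "contract (hcomp 7 m) g = 0" by simp
  then have m_h: "xy_only (contract (hcomp 7 m) h)"
    by (intro xy_only_contract_h_if_HB_1_eq_0[OF HB_1_7]) simp_all
  have "contract r h = hcomp 6 (contract r h)" using homog_hcomp_eq[OF rh] by simp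
  also have "\<dots> = hcomp 6 (contract a G) + hcomp 6 (contract m G)"
    by (simp only: am vsp.linear_add[OF lin_hcomp])
  also have "hcomp 6 (contract a G) = 0" by (rule hcomp_eq_0_if_deg_below[OF a6 order_refl])
  also have "hcomp 6 (contract m G) = contract (hcomp 8 m) g + contract (hcomp 7 m) h"
    using hcomp_contract_G[of 6 m] by simp
  finally have "contract r h = contract (hcomp 8 m) g + contract (hcomp 7 m) h"
    by (simp add: plus_fun_def)
  then show ?thesis
    using xy_onlyD[OF contract_xy_only[OF g_xy_only]] xy_onlyD[OF m_h] by (simp add: xy_only_def)
qed

theorem HB_2_6_ge_4: "4 \<le> HB G 2 6"
proof -
  obtain R where R: "R \<subseteq> lifts" "finite R" "4 \<le> card R"
    "indep_mod R (\<lambda>r. zw_part (contract r h)) {0}"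
    by (rule lifts_zw_part_independent)
  have "\<forall>r\<in>R. \<exists>f. f \<in> ann_g_forms 6 \<and> contract f h + contract r g = 0"
    using R(1) by (auto simp: lifts_def)
  then obtain f where f: "\<And>r. r \<in> R \<Longrightarrow> f r \<in> ann_g_forms 6 \<and> contract (f r) h + contract r g = 0"
    by metis
  have rX: "r \<in> xy_forms 7" if "r \<in> R" for r using R(1) that by (auto simp: lifts_def)
  have "card R \<le> HB G 2 6"
  proof (rule HB_ge[OF G_poly R(2)])
    show "(\<lambda>r. f r + r) ` R \<subseteq> C_pre G 2 6"
      using lift_in_C_pre_2_6 f rX by blast
    show "indep_mod R (\<lambda>r. f r + r) (C_pre G (Suc 2) 6)"
    proof (rule indep_modI)
      fix c assume "(\<Sum>r\<in>R. fscale (c r) (f r + r)) \<in> C_pre G (Suc 2) 6"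
      then have F: "(\<Sum>r\<in>R. fscale (c r) (f r + r)) \<in> C_pre G 3 6" by simp
      have "contract (\<Sum>r\<in>R. fscale (c r) (f r + r)) G = contract (\<Sum>r\<in>R. fscale (c r) r) h"
        using lift_contract_G f by (simp add: contract_lincomb cong: sum.cong)
      moreover have "(\<Sum>r\<in>R. fscale (c r) r) \<in> xy_forms 7"
        using rX by (intro vs.subspace_sum[OF subspace_xy_forms] vs.subspace_scale[OF subspace_xy_forms])
      ultimately have "xy_only (contract (\<Sum>r\<in>R. fscale (c r) r) h)"
        using xy_only_contract_h_if_C_pre_3_6 F by blast
      then have "(\<Sum>r\<in>R. fscale (c r) (zw_part (contract r h))) \<in> {0}"
        by (simp add: xy_only_iff_zw_part contract_lincomb vsp.linear_sum[OF lin_zw_part]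
            vsp.linear_scale[OF lin_zw_part])
      then show "\<forall>r\<in>R. c r = 0" using indep_modD[OF R(4)] by blast
    qed
  qed
  then show ?thesis using R(3) by linarith
qed

end

theorem theorem1p49:
  fixes g g13 :: "mon \<Rightarrow> 'k::field"
  assumes "in_D g" and "dp_homog 14 g"
    and "dp_homog 13 g13"
    and "\<forall>i. HB (\<lambda>b. g b + g13 b) 0 i =
           (let L = [1,2,3,4,5,6,7,8,7,6,5,4,3,2,1] in if i < length L then L ! i else 0)"
    and "\<forall>i. HB (\<lambda>b. g b + g13 b) 1 i =
           (let L = [0,2,4,6,4,2,0,0,2,4,6,4,2,0] in if i < length L then L ! i else 0)"
  shows "HB (\<lambda>b. g b + g13 b) 2 6 \<ge> 4"
proof -
  have g: "homog 14 g" "dp_poly g" and h: "homog 13 g13" "dp_poly g13"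
    using assms(2,3) by (auto simp: dp_homog_def homog_def)
  have g_xy: "xy_only g"
    unfolding xy_only_def
  proof (intro allI impI)
    fix m assume "zw_deg m \<noteq> 0"
    then show "g m = 0" using assms(1) by (cases m) (auto simp: in_D_def)
  qed
  have HB0: "HB (\<lambda>b. g b + g13 b) 0 4 = 5" "HB (\<lambda>b. g b + g13 b) 0 7 = 8"
    "HB (\<lambda>b. g b + g13 b) 0 14 = 1"
    using spec[OF assms(4), of 4] spec[OF assms(4), of 7] spec[OF assms(4), of 14] by simp_all
  have HB1: "HB (\<lambda>b. g b + g13 b) 1 3 = 6" "HB (\<lambda>b. g b + g13 b) 1 6 = 0"
    "HB (\<lambda>b. g b + g13 b) 1 7 = 0"
    using spec[OF assms(5), of 3] spec[OF assms(5), of 6] spec[OF assms(5), of 7] by simp_all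
  have "g \<noteq> 0"
  proof
    assume "g = 0"
    then have "HB (\<lambda>b. g b + g13 b) 0 14 = 0"
      using HB_eq_0_above_degree[OF h(2,1), of 14 0] by simp
    then show False using HB0(3) by simp
  qed
  then interpret split_generator_hilbert g g13
    by unfold_locales (use g h g_xy HB0 HB1 in simp_all)
  show ?thesis by (rule HB_2_6_ge_4)
qed

end
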